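(* In the setting of a Laplacian consistent coarsening of a connected weighted graph with combinatorial Laplacian $L$, fix a level $\ell$ with contraction family $\mathcal P_\ell=\{\mathcal V_{\ell-1}^{(1)},\dots,\mathcal V_{\ell-1}^{(N_\ell)}\}$ and let $\sigma_\ell=\|S_{\ell-1}\Pi_\ell^\perp A_{\ell-1}\|_2$ (with $A_{\ell-1}$, $S_{\ell-1}$, $\Pi_\ell^\perp$ as defined below). Then $$\sigma_\ell^2\le\sum_{\mathcal C\in\mathcal P_\ell}\|\Pi_{\mathcal C}^\perp A_{\ell-1}\|_{L_{\mathcal C}}^2,$$ where $\|M\|_{L_{\mathcal C}}:=\|L_{\mathcal C}^{1/2}M\|_2$ (spectral norm).
   Context: Laplacian consistent coarsening: $G_0=G$, $L_0=L$; at each level $\ell$ a surjective map $\varphi_\ell:\mathcal V_{\ell-1}\to\mathcal V_\ell=\{v'_1,\dots,v'_{N_\ell}\}$ defines contraction sets $\mathcal V_{\ell-1}^{(r)}=\varphi_\ell^{-1}(v'_r)$, each inducing a connected subgraph of $G_{\ell-1}$; $P_\ell(r,i)=1/|\mathcal V_{\ell-1}^{(r)}|$ if $v_i\in\mathcal V_{\ell-1}^{(r)}$, else $0$; $P_\ell^+(i,r)=1$ if $v_i\in\mathcal V_{\ell-1}^{(r)}$, else $0$; $L_\ell=(P_\ell^+)^\top L_{\ell-1}P_\ell^+$, the Laplacian of $G_\ell$ with weight matrix $W_\ell$. $\Pi_\ell^\perp=I-P_\ell^+P_\ell$ and $L_{\ell-1}=S_{\ell-1}^\top S_{\ell-1}$.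 Given a $k$-dimensional subspace $\mathbf R\subseteq\mathbb R^N$ with orthonormal basis $V$: $A_0=B_0=VV^\top L^{+1/2}$ and, for $\ell\ge2$, $B_{\ell-1}=P_{\ell-1}B_{\ell-2}$, $A_{\ell-1}=B_{\ell-1}(B_{\ell-1}^\top L_{\ell-1}B_{\ell-1})^{+1/2}$ ($M^{+1/2}$ is the pseudoinverse of the PSD square root). For a vertex set $\mathcal C\subseteq\mathcal V_{\ell-1}$: $\Pi_{\mathcal C}^\perp$ is the $N_{\ell-1}\times N_{\ell-1}$ matrix with $[\Pi_{\mathcal C}^\perp x](i)=x(i)-\frac{1}{|\mathcal C|}\sum_{v_j\in\mathcal C}x(j)$ if $v_i\in\mathcal C$ and $0$ otherwise; $L_{\mathcal C}$ is the $N_{\ell-1}\times N_{\ell-1}$ combinatorial Laplacian with weights $W_{\mathcal C}(i,j)=W_{\ell-1}(i,j)$ if $v_i,v_j\in\mathcal C$, $W_{\mathcal C}(i,j)=2W_{\ell-1}(i,j)$ if exactly one of $v_i,v_j$ is in $\mathcal C$, and $0$ otherwise. *)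

theory Defs
  imports "Jordan_Normal_Form.Matrix"
begin

definition symmetric_mat :: "real mat \<Rightarrow> bool" where
  "symmetric_mat M \<longleftrightarrow> M\<^sup>T = M"

definition psd_mat :: "real mat \<Rightarrow> bool" where
  "psd_mat M \<longleftrightarrow> square_mat M \<and> symmetric_mat M \<and>
     (\<forall>x \<in> carrier_vec (dim_col M). 0 \<le> x \<bullet> (M *\<^sub>v x))"

definition psd_sqrt :: "real mat \<Rightarrow> real mat" where
  "psd_sqrt M = (THE R. R \<in> carrier_mat (dim_row M) (dim_row M) \<and> psd_mat R \<and> R * R = M)"

definition pinv :: "real mat \<Rightarrow> real mat" where
  "pinv M = (THE X. X \<in> carrier_mat (dim_col M) (dim_row M) \<and>
     M * X * M = M \<and> X * M * X = X \<and> (M * X)\<^sup>T = M * X \<and> (X * M)\<^sup>T = X * M)"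

definition pinv_sqrt :: "real mat \<Rightarrow> real mat" where
  "pinv_sqrt M = pinv (psd_sqrt M)"

definition vnorm :: "real vec \<Rightarrow> real" where
  "vnorm x = sqrt (x \<bullet> x)"

definition spec_norm :: "real mat \<Rightarrow> real" where
  "spec_norm M = Sup {vnorm (M *\<^sub>v x) | x. x \<in> carrier_vec (dim_col M) \<and> vnorm x \<le> 1}"

definition L_norm :: "real mat \<Rightarrow> real mat \<Rightarrow> real" where
  "L_norm L M = spec_norm (psd_sqrt L * M)"

definition weight_matrix :: "nat \<Rightarrow> real mat \<Rightarrow> bool" where
  "weight_matrix n W \<longleftrightarrow> W \<in> carrier_mat n n \<and> symmetric_mat W \<and>
     (\<forall>i<n. \<forall>j<n. 0 \<le> W $$ (i,j)) \<and> (\<forall>i<n. W $$ (i,i) = 0)"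

definition laplacian :: "real mat \<Rightarrow> real mat" where
  "laplacian W = mat (dim_row W) (dim_row W)
     (\<lambda>(i,j). if i = j then (\<Sum>k\<in>{..<dim_row W} - {i}. W $$ (i,k)) else - W $$ (i,j))"

definition weights_of :: "real mat \<Rightarrow> real mat" where
  "weights_of L = mat (dim_row L) (dim_row L) (\<lambda>(i,j). if i = j then 0 else - L $$ (i,j))"

definition edges_in :: "real mat \<Rightarrow> nat set \<Rightarrow> (nat \<times> nat) set" where
  "edges_in W C = {(i,j). i \<in> C \<and> j \<in> C \<and> 0 < W $$ (i,j)}"

definition induces_connected :: "real mat \<Rightarrow> nat set \<Rightarrow> bool" where
  "induces_connected W C \<longleftrightarrow> C \<noteq> {} \<and> (\<forall>i\<in>C. \<forall>j\<in>C. (i,j) \<in> (edges_in W C)\<^sup>*)"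

text \<open>N l = number of vertices at level l; phi l maps vertices of level l-1 to level l (l \<ge> 1).\<close>

definition contraction_set :: "(nat \<Rightarrow> nat) \<Rightarrow> (nat \<Rightarrow> nat \<Rightarrow> nat) \<Rightarrow> nat \<Rightarrow> nat \<Rightarrow> nat set" where
  "contraction_set N \<phi> l r = {i. i < N (l - 1) \<and> \<phi> l i = r}"

definition Pmat :: "(nat \<Rightarrow> nat) \<Rightarrow> (nat \<Rightarrow> nat \<Rightarrow> nat) \<Rightarrow> nat \<Rightarrow> real mat" where
  "Pmat N \<phi> l = mat (N l) (N (l - 1))
     (\<lambda>(r,i). if \<phi> l i = r then 1 / real (card (contraction_set N \<phi> l r)) else 0)"

definition Pplus :: "(nat \<Rightarrow> nat) \<Rightarrow> (nat \<Rightarrow> nat \<Rightarrow> nat) \<Rightarrow> nat \<Rightarrow> real mat" where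
  "Pplus N \<phi> l = mat (N (l - 1)) (N l) (\<lambda>(i,r). if \<phi> l i = r then 1 else 0)"

fun Llev :: "real mat \<Rightarrow> (nat \<Rightarrow> nat) \<Rightarrow> (nat \<Rightarrow> nat \<Rightarrow> nat) \<Rightarrow> nat \<Rightarrow> real mat" where
  "Llev L N \<phi> 0 = L"
| "Llev L N \<phi> (Suc l) = (Pplus N \<phi> (Suc l))\<^sup>T * Llev L N \<phi> l * Pplus N \<phi> (Suc l)"

definition Pi_perp :: "(nat \<Rightarrow> nat) \<Rightarrow> (nat \<Rightarrow> nat \<Rightarrow> nat) \<Rightarrow> nat \<Rightarrow> real mat" where
  "Pi_perp N \<phi> l = 1\<^sub>m (N (l - 1)) - Pplus N \<phi> l * Pmat N \<phi> l"

fun Blev :: "real mat \<Rightarrow> real mat \<Rightarrow> (nat \<Rightarrow> nat) \<Rightarrow> (nat \<Rightarrow> nat \<Rightarrow> nat) \<Rightarrow> nat \<Rightarrow> real mat" where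
  "Blev L V N \<phi> 0 = V * V\<^sup>T * pinv_sqrt L"
| "Blev L V N \<phi> (Suc l) = Pmat N \<phi> (Suc l) * Blev L V N \<phi> l"

definition Alev :: "real mat \<Rightarrow> real mat \<Rightarrow> (nat \<Rightarrow> nat) \<Rightarrow> (nat \<Rightarrow> nat \<Rightarrow> nat) \<Rightarrow> nat \<Rightarrow> real mat" where
  "Alev L V N \<phi> l = (if l = 0 then Blev L V N \<phi> 0
     else Blev L V N \<phi> l * pinv_sqrt ((Blev L V N \<phi> l)\<^sup>T * Llev L N \<phi> l * Blev L V N \<phi> l))"

definition Pi_C_perp :: "nat \<Rightarrow> nat set \<Rightarrow> real mat" where
  "Pi_C_perp n C = mat n n (\<lambda>(i,j). if i \<in> C \<and> j \<in> C
     then (if i = j then 1 else 0) - 1 / real (card C) else 0)"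

definition W_C :: "real mat \<Rightarrow> nat set \<Rightarrow> real mat" where
  "W_C W C = mat (dim_row W) (dim_row W) (\<lambda>(i,j).
     if i \<in> C \<and> j \<in> C then W $$ (i,j)
     else if i \<in> C \<or> j \<in> C then 2 * W $$ (i,j) else 0)"

definition L_C :: "real mat \<Rightarrow> nat set \<Rightarrow> real mat" where
  "L_C W C = laplacian (W_C W C)"

end

theory Submission
  imports Defs "HOL-Computational_Algebra.Formal_Power_Series"
begin

text \<open>
  For a vector \<open>x\<close> put \<open>z = \<Pi>\<^sup>\<perp> A x\<close>. Then \<open>\<parallel>S z\<parallel>\<^sup>2 = z\<^sup>T L z\<close> is the sum of
  \<open>w\<^sub>i\<^sub>j (z\<^sub>i - z\<^sub>j)\<^sup>2\<close> over the edges, while \<open>\<Pi>\<^sub>C\<^sup>\<perp> A x\<close> is the restriction \<open>u\<^sub>C\<close> of \<open>z\<close> to the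
  contraction set \<open>C\<close>. An edge inside one set \<open>C\<close> contributes the same term to \<open>u\<^sub>C\<^sup>T L\<^sub>C u\<^sub>C\<close>.
  An edge between two sets contributes \<open>w\<^sub>i\<^sub>j (z\<^sub>i - z\<^sub>j)\<^sup>2 \<le> 2 w\<^sub>i\<^sub>j z\<^sub>i\<^sup>2 + 2 w\<^sub>i\<^sub>j z\<^sub>j\<^sup>2\<close>, which is
  exactly what the doubled boundary weights of the two local Laplacians count. Hence
  \<open>\<parallel>S z\<parallel>\<^sup>2 \<le> \<Sum>\<^sub>C u\<^sub>C\<^sup>T L\<^sub>C u\<^sub>C = \<Sum>\<^sub>C \<parallel>L\<^sub>C\<^sup>1\<^sup>/\<^sup>2 \<Pi>\<^sub>C\<^sup>\<perp> A x\<parallel>\<^sup>2\<close>, and the supremum over unit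
  vectors \<open>x\<close> gives the bound on spectral norms.

  The identity \<open>\<parallel>L\<^sub>C\<^sup>1\<^sup>/\<^sup>2 u\<parallel>\<^sup>2 = u\<^sup>T L\<^sub>C u\<close> needs the PSD square root to exist. It is obtained
  without spectral theory: for PSD \<open>A\<close> and large \<open>c\<close> the matrix \<open>B = I - A/c\<close> is a PSD
  contraction, and the binomial series \<open>\<surd>c \<Sum>\<^sub>k (-1)\<^sup>k (1/2 choose k) B\<^sup>k\<close> of \<open>\<surd>c (I - B)\<^sup>1\<^sup>/\<^sup>2\<close>
  converges entrywise to a PSD matrix whose square is \<open>A\<close>.
\<close>

lemma scalar_prod_sum: "v \<bullet> w = (\<Sum>i<dim_vec w. v $ i * w $ i)"
  unfolding scalar_prod_def by (simp add: atLeast0LessThan)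

lemma mult_mat_vec_index_sum:
  "A \<in> carrier_mat n m \<Longrightarrow> y \<in> carrier_vec m \<Longrightarrow> i < n \<Longrightarrow>
   (A *\<^sub>v y) $ i = (\<Sum>j<m. A $$ (i,j) * y $ j)"
  by (simp add: scalar_prod_sum)

lemma times_mat_index_sum:
  "X \<in> carrier_mat n k \<Longrightarrow> Y \<in> carrier_mat k m \<Longrightarrow> i < n \<Longrightarrow> j < m \<Longrightarrow>
   (X * Y) $$ (i,j) = (\<Sum>l<k. X $$ (i,l) * Y $$ (l,j))"
  by (simp add: scalar_prod_sum)

lemma bilinear_form_sum:
  assumes "A \<in> carrier_mat n m" "x \<in> carrier_vec n" "y \<in> carrier_vec m"
  shows "x \<bullet> (A *\<^sub>v y) = (\<Sum>i<n. \<Sum>j<m. x $ i * A $$ (i,j) * y $ j)"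
  using assms by (simp add: scalar_prod_sum mult_mat_vec_index_sum sum_distrib_left mult.assoc)

lemma symmetric_matD:
  "symmetric_mat A \<Longrightarrow> A \<in> carrier_mat n n \<Longrightarrow> i < n \<Longrightarrow> j < n \<Longrightarrow> A $$ (i,j) = A $$ (j,i)"
  unfolding symmetric_mat_def by (metis carrier_matD(1) carrier_matD(2) index_transpose_mat(1))

lemma symmetric_bilinear_form_commute:
  assumes "symmetric_mat A" "A \<in> carrier_mat n n" "x \<in> carrier_vec n" "y \<in> carrier_vec n"
  shows "x \<bullet> (A *\<^sub>v y) = y \<bullet> (A *\<^sub>v x)"
proof -
  have "x \<bullet> (A *\<^sub>v y) = (\<Sum>j<n. \<Sum>i<n. x $ i * A $$ (i,j) * y $ j)"
    unfolding bilinear_form_sum[OF assms(2-4)] by (rule sum.swap)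
  also have "\<dots> = (\<Sum>j<n. \<Sum>i<n. y $ j * A $$ (j,i) * x $ i)"
    using symmetric_matD[OF assms(1,2)] by (intro sum.cong refl) auto
  also have "\<dots> = y \<bullet> (A *\<^sub>v x)" by (rule bilinear_form_sum[OF assms(2,4,3), symmetric])
  finally show ?thesis .
qed

lemma scalar_prod_self_nonneg: "0 \<le> (v::real vec) \<bullet> v"
  using conjugate_square_ge_0_vec[of v] by simp

lemma scalar_prod_self_eq_0: "(v::real vec) \<bullet> v = 0 \<Longrightarrow> v \<in> carrier_vec n \<Longrightarrow> v = 0\<^sub>v n"
  using conjugate_square_eq_0_vec[of v n] by simp

lemma scalar_prod_gram:
  assumes S: "S \<in> carrier_mat p n" and z: "(z::real vec) \<in> carrier_vec n"
  shows "(S *\<^sub>v z) \<bullet> (S *\<^sub>v z) = z \<bullet> ((S\<^sup>T * S) *\<^sub>v z)"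
proof -
  have St: "S\<^sup>T \<in> carrier_mat n p" and Sz: "S *\<^sub>v z \<in> carrier_vec p" using S z by auto
  have "z \<bullet> ((S\<^sup>T * S) *\<^sub>v z) = (S\<^sup>T *\<^sub>v (S *\<^sub>v z)) \<bullet> z"
    using comm_scalar_prod[OF z, of "S\<^sup>T *\<^sub>v (S *\<^sub>v z)"] St Sz S z by simp
  also have "\<dots> = (S *\<^sub>v z) \<bullet> (S *\<^sub>v z)" by (rule transpose_vec_mult_scalar[OF S z Sz])
  finally show ?thesis by simp
qed

lemma psd_matD: "psd_mat M \<Longrightarrow> M \<in> carrier_mat n n \<Longrightarrow> x \<in> carrier_vec n \<Longrightarrow> 0 \<le> x \<bullet> (M *\<^sub>v x)"
  unfolding psd_mat_def by auto

lemma nonneg_quadratic_discriminant: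
  fixes a b c :: real
  assumes "\<And>t. 0 \<le> a + 2*t*b + t^2*c" "0 \<le> c"
  shows "b^2 \<le> a * c"
proof (cases "c = 0")
  case True
  show ?thesis
  proof (rule ccontr)
    assume "\<not> ?thesis"
    hence "b \<noteq> 0" using True by auto
    have "0 \<le> a + 2 * (-(a+1)/(2*b)) * b" using assms(1)[of "-(a+1)/(2*b)"] True by simp
    also have "\<dots> = -1" using \<open>b \<noteq> 0\<close> by (simp add: field_simps)
    finally show False by simp
  qed
next
  case False
  hence c: "c > 0" using assms by auto
  have "0 \<le> a + 2 * (-b/c) * b + (-b/c)^2 * c" by (rule assms(1))
  also have "\<dots> = a - b^2 / c" using c by (simp add: field_simps power2_eq_square)
  finally show ?thesis using c by (simp add: field_simps)
qed

lemma psd_cauchy_schwarz: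
  assumes M: "psd_mat M" "M \<in> carrier_mat n n" and x: "x \<in> carrier_vec n" and y: "y \<in> carrier_vec n"
  shows "(x \<bullet> (M *\<^sub>v y))^2 \<le> (x \<bullet> (M *\<^sub>v x)) * (y \<bullet> (M *\<^sub>v y))"
proof (rule nonneg_quadratic_discriminant)
  have sym: "symmetric_mat M" using M unfolding psd_mat_def by auto
  fix t :: real
  let ?z = "vec n (\<lambda>i. x $ i + t * y $ i)"
  have z: "?z \<in> carrier_vec n" by simp
  have "0 \<le> ?z \<bullet> (M *\<^sub>v ?z)" by (rule psd_matD[OF M z])
  also have "?z \<bullet> (M *\<^sub>v ?z) = (\<Sum>i<n. \<Sum>j<n. x $ i * M $$ (i,j) * x $ j
     + t * (x $ i * M $$ (i,j) * y $ j) + t * (y $ i * M $$ (i,j) * x $ j) + t^2 * (y $ i * M $$ (i,j) * y $ j))"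
    unfolding bilinear_form_sum[OF M(2) z z]
    by (intro sum.cong refl) (simp add: algebra_simps power2_eq_square)
  also have "\<dots> = (\<Sum>i<n. \<Sum>j<n. x $ i * M $$ (i,j) * x $ j)
     + t * (\<Sum>i<n. \<Sum>j<n. x $ i * M $$ (i,j) * y $ j)
     + t * (\<Sum>i<n. \<Sum>j<n. y $ i * M $$ (i,j) * x $ j)
     + t^2 * (\<Sum>i<n. \<Sum>j<n. y $ i * M $$ (i,j) * y $ j)"
    by (simp only: sum.distrib sum_distrib_left)
  also have "\<dots> = x \<bullet> (M *\<^sub>v x) + 2 * t * (x \<bullet> (M *\<^sub>v y)) + t^2 * (y \<bullet> (M *\<^sub>v y))"
    using bilinear_form_sum[OF M(2) x x] bilinear_form_sum[OF M(2) x y] bilinear_form_sum[OF M(2) y x]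
      bilinear_form_sum[OF M(2) y y] symmetric_bilinear_form_commute[OF sym M(2) x y]
    by simp
  finally show "0 \<le> x \<bullet> (M *\<^sub>v x) + 2 * t * (x \<bullet> (M *\<^sub>v y)) + t^2 * (y \<bullet> (M *\<^sub>v y))" .
qed (use psd_matD[OF M] y in auto)

lemma psd_form_eq_0_imp_kernel:
  assumes M: "psd_mat M" "M \<in> carrier_mat n n" and x: "x \<in> carrier_vec n"
    and z: "x \<bullet> (M *\<^sub>v x) = 0"
  shows "M *\<^sub>v x = 0\<^sub>v n"
proof -
  let ?y = "M *\<^sub>v x"
  have y: "?y \<in> carrier_vec n" using M x by auto
  have "(?y \<bullet> (M *\<^sub>v x))^2 \<le> (?y \<bullet> (M *\<^sub>v ?y)) * (x \<bullet> (M *\<^sub>v x))"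
    by (rule psd_cauchy_schwarz[OF M y x])
  hence "?y \<bullet> ?y = 0" using z by simp
  thus ?thesis using scalar_prod_self_eq_0 y by blast
qed

lemma scalar_prod_component_le: assumes "(x::real vec) \<in> carrier_vec n" "i < n" shows "(x $ i)^2 \<le> x \<bullet> x"
proof -
  have "(x $ i)^2 \<le> (\<Sum>k<n. x $ k * x $ k)"
    using assms(2) member_le_sum[of i "{..<n}" "\<lambda>k. x $ k * x $ k"] by (simp add: power2_eq_square)
  thus ?thesis using assms(1) by (simp add: scalar_prod_sum)
qed

lemma scalar_prod_le_half_squares: assumes "(x::real vec) \<in> carrier_vec n" "y \<in> carrier_vec n"
  shows "2 * (x \<bullet> y) \<le> x \<bullet> x + y \<bullet> y"
proof -
  have "(\<Sum>i<n. 2 * (x $ i * y $ i)) \<le> (\<Sum>i<n. x $ i * x $ i + y $ i * y $ i)"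
  proof (intro sum_mono)
    fix i
    have "0 \<le> (x $ i - y $ i)^2" by simp
    thus "2 * (x $ i * y $ i) \<le> x $ i * x $ i + y $ i * y $ i" by (simp add: power2_eq_square algebra_simps)
  qed
  thus ?thesis using assms by (simp add: scalar_prod_sum sum.distrib sum_distrib_left)
qed

section \<open>The PSD square root\<close>

definition sqrt_coeff :: "nat \<Rightarrow> real" where
  "sqrt_coeff k = (-1)^k * ((1/2::real) gchoose k)"

lemma sqrt_coeff_0 [simp]: "sqrt_coeff 0 = 1"
  by (simp add: sqrt_coeff_def)

lemma sqrt_coeff_Suc_rec: "sqrt_coeff (Suc k) = sqrt_coeff k * (real k - 1/2) / (real k + 1)"
proof -
  have "(1/2::real) * ((1/2) gchoose k) = real k * ((1/2) gchoose k) + real (Suc k) * ((1/2) gchoose (Suc k))"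
    by (rule gbinomial_mult_1)
  hence "((1/2::real) gchoose (Suc k)) = (1/2 - real k) * ((1/2) gchoose k) / (real k + 1)"
    by (simp add: field_simps)
  hence "sqrt_coeff (Suc k) = (-1) * (-1)^k * ((1/2 - real k) * ((1/2) gchoose k) / (real k + 1))"
    unfolding sqrt_coeff_def by simp
  thus ?thesis unfolding sqrt_coeff_def by (simp add: field_simps)
qed

lemma sqrt_coeff_Suc: "sqrt_coeff (Suc n) = - (\<Sum>k\<le>n. sqrt_coeff k) / (2 * (real n + 1))"
proof (induction n)
  case 0
  then show ?case by (simp add: sqrt_coeff_Suc_rec)
next
  case (Suc n)
  show ?case
    unfolding sqrt_coeff_Suc_rec[of "Suc n"] sum.atMost_Suc Suc
    by (simp add: field_simps)
qed

lemma sqrt_coeff_partial_sum_nonneg: "0 \<le> (\<Sum>k\<le>n. sqrt_coeff k)"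
proof (induction n)
  case (Suc n)
  have "(\<Sum>k\<le>Suc n. sqrt_coeff k) = (\<Sum>k\<le>n. sqrt_coeff k) * (1 - 1 / (2 * (real n + 1)))"
    by (simp add: sqrt_coeff_Suc field_simps)
  also have "0 \<le> \<dots>" using Suc by (simp add: field_simps)
  finally show ?case .
qed simp

lemma sqrt_coeff_partial_sum_lessThan_nonneg: "0 \<le> (\<Sum>k<n. sqrt_coeff k)"
  using sqrt_coeff_partial_sum_nonneg[of "n - 1"] by (cases n) (auto simp: lessThan_Suc_atMost)

lemma sqrt_coeff_Suc_nonpos: "sqrt_coeff (Suc k) \<le> 0"
  using sqrt_coeff_partial_sum_nonneg[of k] by (simp add: sqrt_coeff_Suc divide_nonneg_pos)

lemma summable_abs_sqrt_coeff: "summable (\<lambda>k. \<bar>sqrt_coeff k\<bar>)"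
proof (rule summableI_nonneg_bounded[where x = 2])
  fix n
  have abs: "\<bar>sqrt_coeff k\<bar> = (if k = 0 then 2 else 0) - sqrt_coeff k" for k
    by (cases k) (auto simp: sqrt_coeff_Suc_nonpos)
  have "(\<Sum>i<n. \<bar>sqrt_coeff i\<bar>) = (\<Sum>i<n. (if i = 0 then 2 else 0)) - (\<Sum>i<n. sqrt_coeff i)"
    by (simp add: abs sum_subtractf)
  moreover have "(\<Sum>i<n. (if i = 0 then 2 else 0::real)) \<le> 2"
    by (cases n) (auto simp: sum.delta)
  ultimately show "(\<Sum>i<n. \<bar>sqrt_coeff i\<bar>) \<le> 2"
    using sqrt_coeff_partial_sum_lessThan_nonneg[of n] by linarith
qed auto

lemma summable_sqrt_coeff: "summable sqrt_coeff"
  using summable_abs_sqrt_coeff summable_rabs_cancel by blast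

lemma suminf_sqrt_coeff_nonneg: "0 \<le> suminf sqrt_coeff"
proof -
  have "(\<lambda>n. \<Sum>k<n. sqrt_coeff k) \<longlonglongrightarrow> suminf sqrt_coeff"
    using summable_sqrt_coeff summable_LIMSEQ by blast
  then show ?thesis
    by (rule LIMSEQ_le_const) (use sqrt_coeff_partial_sum_lessThan_nonneg in auto)
qed

text \<open>The series squares to \<open>1 - x\<close>: this is Vandermonde's identity for \<open>1/2 + 1/2 = 1\<close>.\<close>

lemma sqrt_coeff_convolution:
  "(\<Sum>i\<le>n. sqrt_coeff i * sqrt_coeff (n - i)) = (if n = 0 then 1 else if n = 1 then -1 else 0)"
proof -
  have "(\<Sum>i\<le>n. sqrt_coeff i * sqrt_coeff (n - i))
      = (-1)^n * (\<Sum>i=0..n. ((1/2::real) gchoose i) * ((1/2) gchoose (n - i)))"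
    unfolding sqrt_coeff_def sum_distrib_left
    by (rule sum.cong) (auto simp: atMost_atLeast0 power_add[symmetric])
  also have "\<dots> = (-1)^n * ((1::real) gchoose n)"
    using gbinomial_Vandermonde[of "1/2::real" "1/2" n] by simp
  also have "\<dots> = (if n = 0 then 1 else if n = 1 then -1 else 0)"
  proof -
    consider "n = 0" | "n = 1" | m where "n = Suc (Suc m)" by (metis One_nat_def not0_implies_Suc)
    then show ?thesis
    proof cases
      case 3
      have "((1::real) gchoose Suc (Suc m)) = 0"
        unfolding gbinomial_Suc by (auto simp: prod_zero_iff intro!: bexI[of _ 1])
      then show ?thesis using 3 by simp
    qed auto
  qed
  finally show ?thesis .
qed

lemma pow_mat_commute: "B \<in> carrier_mat n n \<Longrightarrow> B * B ^\<^sub>m k = B ^\<^sub>m k * B"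
proof (induction k)
  case (Suc k)
  have "B * B ^\<^sub>m Suc k = (B * B ^\<^sub>m k) * B"
    using Suc.prems by (simp add: assoc_mult_mat[symmetric, of B n n _ n B n])
  also have "\<dots> = B ^\<^sub>m Suc k * B" using Suc by simp
  finally show ?case .
qed simp

lemma pow_mat_add: "B \<in> carrier_mat n n \<Longrightarrow> B ^\<^sub>m a * B ^\<^sub>m b = B ^\<^sub>m (a + b)"
proof (induction b)
  case (Suc b)
  have "B ^\<^sub>m a * B ^\<^sub>m Suc b = (B ^\<^sub>m a * B ^\<^sub>m b) * B"
    using Suc.prems by (simp del: assoc_mult_mat add: assoc_mult_mat[symmetric, of _ n n _ n _ n])
  also have "\<dots> = B ^\<^sub>m Suc (a + b)" using Suc by simp
  finally show ?case by simp
qed simp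

lemma symmetric_pow_mat:
  assumes "symmetric_mat B" "B \<in> carrier_mat n n" shows "symmetric_mat (B ^\<^sub>m k)"
proof (induction k)
  case 0 then show ?case by (simp add: symmetric_mat_def)
next
  case (Suc k)
  have "transpose_mat (B ^\<^sub>m Suc k) = transpose_mat B * transpose_mat (B ^\<^sub>m k)"
    using assms(2) by (simp add: transpose_mult[of _ n n _ n])
  also have "\<dots> = B ^\<^sub>m Suc k"
    using Suc assms pow_mat_commute[OF assms(2)] unfolding symmetric_mat_def by simp
  finally show ?case unfolding symmetric_mat_def .
qed

context
  fixes A :: "real mat" and n :: nat
  assumes A: "A \<in> carrier_mat n n" and A_psd: "psd_mat A"
begin

definition sqrt_scale :: real where
  "sqrt_scale = 1 + (\<Sum>i<n. \<Sum>j<n. \<bar>A $$ (i,j)\<bar>)"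

definition sqrt_contraction :: "real mat" where
  "sqrt_contraction = 1\<^sub>m n - (1 / sqrt_scale) \<cdot>\<^sub>m A"

definition sqrt_series_entry :: "nat \<Rightarrow> nat \<Rightarrow> real" where
  "sqrt_series_entry i j = (\<Sum>k. sqrt_coeff k * (sqrt_contraction ^\<^sub>m k) $$ (i,j))"

definition series_sqrt :: "real mat" where
  "series_sqrt = sqrt sqrt_scale \<cdot>\<^sub>m mat n n (\<lambda>(i,j). sqrt_series_entry i j)"

lemma sqrt_scale_pos: "0 < sqrt_scale"
proof -
  have "0 \<le> (\<Sum>i<n. \<Sum>j<n. \<bar>A $$ (i,j)\<bar>)" by (intro sum_nonneg) auto
  thus ?thesis unfolding sqrt_scale_def by simp
qed

lemma sqrt_contraction_carrier: "sqrt_contraction \<in> carrier_mat n n"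
  unfolding sqrt_contraction_def using A by auto

lemma symmetric_sqrt_contraction: "symmetric_mat sqrt_contraction"
proof -
  have "A $$ (j,i) = A $$ (i,j)" if "i < n" "j < n" for i j
    using A_psd A that unfolding psd_mat_def by (metis symmetric_matD)
  thus ?thesis unfolding symmetric_mat_def sqrt_contraction_def using A by (intro eq_matI) auto
qed

lemma psd_form_le_sqrt_scale:
  assumes x: "x \<in> carrier_vec n" shows "x \<bullet> (A *\<^sub>v x) \<le> sqrt_scale * (x \<bullet> x)"
proof -
  have "x \<bullet> (A *\<^sub>v x) \<le> (\<Sum>i<n. \<Sum>j<n. \<bar>A $$ (i,j)\<bar> * (x \<bullet> x))"
    unfolding bilinear_form_sum[OF A x x]
  proof (intro sum_mono)
    fix i j assume "i \<in> {..<n}" "j \<in> {..<n}"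
    have "0 \<le> (\<bar>x $ i\<bar> - \<bar>x $ j\<bar>)^2" by simp
    hence "2 * \<bar>x $ i * x $ j\<bar> \<le> (x $ i)^2 + (x $ j)^2"
      by (simp add: power2_eq_square algebra_simps abs_mult)
    moreover have "(x $ i)^2 \<le> x \<bullet> x" "(x $ j)^2 \<le> x \<bullet> x"
      using \<open>i \<in> {..<n}\<close> \<open>j \<in> {..<n}\<close> by (auto intro: scalar_prod_component_le[OF x])
    ultimately have "\<bar>x $ i * x $ j\<bar> \<le> x \<bullet> x" by linarith
    hence "\<bar>A $$ (i,j)\<bar> * \<bar>x $ i * x $ j\<bar> \<le> \<bar>A $$ (i,j)\<bar> * (x \<bullet> x)"
      by (intro mult_left_mono) auto
    moreover have "x $ i * A $$ (i,j) * x $ j \<le> \<bar>x $ i * A $$ (i,j) * x $ j\<bar>" by (rule abs_ge_self)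
    hence "x $ i * A $$ (i,j) * x $ j \<le> \<bar>A $$ (i,j)\<bar> * \<bar>x $ i * x $ j\<bar>"
      by (simp add: abs_mult algebra_simps)
    ultimately show "x $ i * A $$ (i,j) * x $ j \<le> \<bar>A $$ (i,j)\<bar> * (x \<bullet> x)" by linarith
  qed
  also have "\<dots> = (sqrt_scale - 1) * (x \<bullet> x)" unfolding sqrt_scale_def by (simp add: sum_distrib_right)
  also have "\<dots> \<le> sqrt_scale * (x \<bullet> x)" using scalar_prod_self_nonneg[of x] by (simp add: algebra_simps)
  finally show ?thesis .
qed

lemma sqrt_contraction_form:
  assumes x: "x \<in> carrier_vec n"
  shows "x \<bullet> (sqrt_contraction *\<^sub>v x) = x \<bullet> x - (1 / sqrt_scale) * (x \<bullet> (A *\<^sub>v x))"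
proof -
  have "x \<bullet> (sqrt_contraction *\<^sub>v x) = (\<Sum>i<n. \<Sum>j<n. (if i = j then x $ i * x $ j else 0)
      - (1 / sqrt_scale) * (x $ i * A $$ (i,j) * x $ j))"
    unfolding bilinear_form_sum[OF sqrt_contraction_carrier x x]
    using A by (intro sum.cong refl) (auto simp: sqrt_contraction_def algebra_simps)
  also have "\<dots> = x \<bullet> x - (1 / sqrt_scale) * (x \<bullet> (A *\<^sub>v x))"
    using bilinear_form_sum[OF A x x] x by (simp add: scalar_prod_sum sum_subtractf sum_distrib_left)
  finally show ?thesis .
qed

lemma psd_sqrt_contraction: "psd_mat sqrt_contraction"
proof -
  have "0 \<le> x \<bullet> (sqrt_contraction *\<^sub>v x)" if x: "x \<in> carrier_vec n" for x
  proof -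
    have "(1 / sqrt_scale) * (x \<bullet> (A *\<^sub>v x)) \<le> (1 / sqrt_scale) * (sqrt_scale * (x \<bullet> x))"
      using psd_form_le_sqrt_scale[OF x] sqrt_scale_pos by (intro mult_left_mono) auto
    thus ?thesis using sqrt_contraction_form[OF x] sqrt_scale_pos by simp
  qed
  thus ?thesis using sqrt_contraction_carrier symmetric_sqrt_contraction unfolding psd_mat_def by auto
qed

lemma sqrt_contraction_form_le:
  assumes x: "x \<in> carrier_vec n" shows "x \<bullet> (sqrt_contraction *\<^sub>v x) \<le> x \<bullet> x"
  using sqrt_contraction_form[OF x] psd_matD[OF A_psd A x] sqrt_scale_pos by simp

text \<open>The contraction property follows from \<open>0 \<le> B \<le> I\<close> by Cauchy-Schwarz for the form of \<open>B\<close>.\<close>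

lemma sqrt_contraction_norm_le:
  assumes x: "x \<in> carrier_vec n"
  shows "(sqrt_contraction *\<^sub>v x) \<bullet> (sqrt_contraction *\<^sub>v x) \<le> x \<bullet> x"
proof -
  let ?B = sqrt_contraction
  let ?y = "?B *\<^sub>v x"
  have B: "?B \<in> carrier_mat n n" and y: "?y \<in> carrier_vec n"
    using sqrt_contraction_carrier x by auto
  have "(x \<bullet> (?B *\<^sub>v ?y))^2 \<le> (x \<bullet> (?B *\<^sub>v x)) * (?y \<bullet> (?B *\<^sub>v ?y))"
    by (rule psd_cauchy_schwarz[OF psd_sqrt_contraction B x y])
  also have "\<dots> \<le> (x \<bullet> x) * (?y \<bullet> ?y)"
    using sqrt_contraction_form_le[OF x] sqrt_contraction_form_le[OF y]
      psd_matD[OF psd_sqrt_contraction B x] psd_matD[OF psd_sqrt_contraction B y]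
    by (intro mult_mono) (auto simp: scalar_prod_self_nonneg)
  finally have "(?y \<bullet> ?y)^2 \<le> (x \<bullet> x) * (?y \<bullet> ?y)"
    using symmetric_bilinear_form_commute[OF symmetric_sqrt_contraction B x y] by simp
  thus ?thesis using scalar_prod_self_nonneg[of ?y]
    by (cases "?y \<bullet> ?y = 0") (auto simp: power2_eq_square scalar_prod_self_nonneg)
qed

lemma pow_sqrt_contraction_norm_le:
  assumes x: "x \<in> carrier_vec n"
  shows "(sqrt_contraction ^\<^sub>m k *\<^sub>v x) \<bullet> (sqrt_contraction ^\<^sub>m k *\<^sub>v x) \<le> x \<bullet> x"
  using x
proof (induction k arbitrary: x)
  case (Suc k)
  have "sqrt_contraction ^\<^sub>m Suc k *\<^sub>v x = sqrt_contraction ^\<^sub>m k *\<^sub>v (sqrt_contraction *\<^sub>v x)"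
    using sqrt_contraction_carrier Suc.prems by (simp add: assoc_mult_mat_vec[of _ n n _ n])
  moreover have "sqrt_contraction *\<^sub>v x \<in> carrier_vec n" using sqrt_contraction_carrier Suc.prems by simp
  ultimately show ?case using Suc.IH sqrt_contraction_norm_le[OF Suc.prems] by (metis order_trans)
qed (use sqrt_contraction_carrier in simp)

lemma pow_sqrt_contraction_index_bound:
  assumes "i < n" "j < n" shows "\<bar>(sqrt_contraction ^\<^sub>m k) $$ (i,j)\<bar> \<le> 1"
proof -
  let ?P = "sqrt_contraction ^\<^sub>m k"
  let ?v = "?P *\<^sub>v unit_vec n j"
  have P: "?P \<in> carrier_mat n n" using sqrt_contraction_carrier by simp
  have "?v $ i = (\<Sum>l<n. ?P $$ (i,l) * unit_vec n j $ l)"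
    by (rule mult_mat_vec_index_sum[OF P unit_vec_carrier assms(1)])
  also have "\<dots> = (\<Sum>l<n. if l = j then ?P $$ (i,j) else 0)"
    using assms by (intro sum.cong refl) auto
  finally have v: "?v $ i = ?P $$ (i,j)" using assms by simp
  have "(?v $ i)^2 \<le> ?v \<bullet> ?v" using scalar_prod_component_le[of ?v n i] P assms by simp
  also have "\<dots> \<le> unit_vec n j \<bullet> unit_vec n j" by (rule pow_sqrt_contraction_norm_le) simp
  also have "\<dots> = 1" using assms by simp
  finally show ?thesis unfolding v by (simp add: abs_square_le_1)
qed

lemma pow_sqrt_contraction_form_le:
  assumes x: "x \<in> carrier_vec n" shows "x \<bullet> (sqrt_contraction ^\<^sub>m k *\<^sub>v x) \<le> x \<bullet> x"
proof -
  have "sqrt_contraction ^\<^sub>m k *\<^sub>v x \<in> carrier_vec n"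
    using sqrt_contraction_carrier x by (metis mult_mat_vec_carrier pow_carrier_mat)
  hence "2 * (x \<bullet> (sqrt_contraction ^\<^sub>m k *\<^sub>v x))
      \<le> x \<bullet> x + (sqrt_contraction ^\<^sub>m k *\<^sub>v x) \<bullet> (sqrt_contraction ^\<^sub>m k *\<^sub>v x)"
    by (rule scalar_prod_le_half_squares[OF x])
  thus ?thesis using pow_sqrt_contraction_norm_le[OF x, of k] by simp
qed

lemma summable_norm_sqrt_series:
  "i < n \<Longrightarrow> j < n \<Longrightarrow> summable (\<lambda>k. norm (sqrt_coeff k * (sqrt_contraction ^\<^sub>m k) $$ (i,j)))"
proof (rule summable_comparison_test'[OF summable_abs_sqrt_coeff, of 0])
  fix k assume "i < n" "j < n"
  hence "\<bar>sqrt_coeff k\<bar> * \<bar>(sqrt_contraction ^\<^sub>m k) $$ (i,j)\<bar> \<le> \<bar>sqrt_coeff k\<bar> * 1"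
    by (intro mult_left_mono pow_sqrt_contraction_index_bound) auto
  thus "norm (norm (sqrt_coeff k * (sqrt_contraction ^\<^sub>m k) $$ (i,j))) \<le> \<bar>sqrt_coeff k\<bar>"
    by (simp add: abs_mult)
qed

lemma summable_sqrt_series:
  "i < n \<Longrightarrow> j < n \<Longrightarrow> summable (\<lambda>k. sqrt_coeff k * (sqrt_contraction ^\<^sub>m k) $$ (i,j))"
  by (rule summable_norm_cancel[OF summable_norm_sqrt_series])

lemma series_sqrt_carrier: "series_sqrt \<in> carrier_mat n n"
  unfolding series_sqrt_def by (rule smult_carrier_mat[OF mat_carrier])

lemma series_sqrt_index: "i < n \<Longrightarrow> j < n \<Longrightarrow> series_sqrt $$ (i,j) = sqrt sqrt_scale * sqrt_series_entry i j"
  unfolding series_sqrt_def by simp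

lemma symmetric_series_sqrt: "symmetric_mat series_sqrt"
proof -
  have "sqrt_series_entry i j = sqrt_series_entry j i" if "i < n" "j < n" for i j
    unfolding sqrt_series_entry_def
    using symmetric_matD[OF symmetric_pow_mat[OF symmetric_sqrt_contraction sqrt_contraction_carrier]
        _ that] sqrt_contraction_carrier
    by simp
  thus ?thesis unfolding symmetric_mat_def series_sqrt_def by (intro eq_matI) auto
qed

lemma series_sqrt_square_index:
  assumes ij: "i < n" "j < n" shows "(series_sqrt * series_sqrt) $$ (i,j) = A $$ (i,j)"
proof -
  let ?B = sqrt_contraction
  have B: "?B \<in> carrier_mat n n" by (rule sqrt_contraction_carrier)
  define T where "T m k = (\<Sum>a\<le>k. (sqrt_coeff a * (?B ^\<^sub>m a) $$ (i,m))
      * (sqrt_coeff (k - a) * (?B ^\<^sub>m (k - a)) $$ (m,j)))" for m k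
  have prod: "sqrt_series_entry i m * sqrt_series_entry m j = (\<Sum>k. T m k)" and sum_T: "summable (T m)"
    if m: "m < n" for m
    unfolding sqrt_series_entry_def T_def
    by (rule Cauchy_product summable_Cauchy_product,
        (rule summable_norm_sqrt_series; use ij m in simp)+)+
  have T: "(\<Sum>m<n. T m k) = (if k = 0 then 1 else if k = 1 then -1 else 0) * (?B ^\<^sub>m k) $$ (i,j)" for k
  proof -
    have "(\<Sum>m<n. T m k) = (\<Sum>a\<le>k. sqrt_coeff a * sqrt_coeff (k - a)
        * (\<Sum>m<n. (?B ^\<^sub>m a) $$ (i,m) * (?B ^\<^sub>m (k - a)) $$ (m,j)))"
      unfolding T_def by (subst sum.swap) (simp add: sum_distrib_left algebra_simps)
    also have "\<dots> = (\<Sum>a\<le>k. sqrt_coeff a * sqrt_coeff (k - a)) * (?B ^\<^sub>m k) $$ (i,j)"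
      using pow_mat_add[OF B] ij B
      by (simp add: sum_distrib_right times_mat_index_sum[of _ n n _ n, symmetric])
    finally show ?thesis unfolding sqrt_coeff_convolution .
  qed
  have "(series_sqrt * series_sqrt) $$ (i,j) = (\<Sum>m<n. series_sqrt $$ (i,m) * series_sqrt $$ (m,j))"
    by (rule times_mat_index_sum[OF series_sqrt_carrier series_sqrt_carrier ij])
  also have "\<dots> = sqrt_scale * (\<Sum>m<n. \<Sum>k. T m k)"
    unfolding sum_distrib_left
  proof (intro sum.cong refl)
    fix m assume m: "m \<in> {..<n}"
    hence "series_sqrt $$ (i,m) * series_sqrt $$ (m,j)
        = (sqrt sqrt_scale * sqrt sqrt_scale) * (sqrt_series_entry i m * sqrt_series_entry m j)"
      using ij by (simp add: series_sqrt_index algebra_simps)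
    thus "series_sqrt $$ (i,m) * series_sqrt $$ (m,j) = sqrt_scale * (\<Sum>k. T m k)"
      using sqrt_scale_pos prod m by simp
  qed
  also have "(\<Sum>m<n. \<Sum>k. T m k) = (\<Sum>k. \<Sum>m<n. T m k)"
    by (rule suminf_sum[symmetric]) (simp add: sum_T)
  also have "\<dots> = (\<Sum>k\<in>{0,1}. (if k = 0 then 1 else if k = 1 then -1 else 0) * (?B ^\<^sub>m k) $$ (i,j))"
    unfolding T by (rule suminf_finite) auto
  also have "\<dots> = (1 / sqrt_scale) * A $$ (i,j)"
    using ij A B by (simp add: sqrt_contraction_def)
  finally show ?thesis using sqrt_scale_pos by simp
qed

lemma series_sqrt_square: "series_sqrt * series_sqrt = A"
  using series_sqrt_carrier A series_sqrt_square_index by (intro eq_matI) auto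

text \<open>Positivity: \<open>x\<^sup>T B\<^sup>k x \<le> x\<^sup>T x\<close> while all coefficients but the first are \<open>\<le> 0\<close>, so the form is
  at least \<open>(\<Sum>\<^sub>k c\<^sub>k) x\<^sup>T x \<ge> 0\<close>.\<close>

lemma series_sqrt_form_nonneg:
  assumes x: "x \<in> carrier_vec n" shows "0 \<le> x \<bullet> (series_sqrt *\<^sub>v x)"
proof -
  let ?B = sqrt_contraction
  define q where "q k = x \<bullet> (?B ^\<^sub>m k *\<^sub>v x)" for k
  define t where "t k = (\<Sum>i<n. \<Sum>j<n. x $ i * x $ j * (sqrt_coeff k * (?B ^\<^sub>m k) $$ (i,j)))" for k
  have P: "?B ^\<^sub>m k \<in> carrier_mat n n" for k using sqrt_contraction_carrier by simp
  have sm: "summable (\<lambda>k. x $ i * x $ j * (sqrt_coeff k * (?B ^\<^sub>m k) $$ (i,j)))"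
    if "i < n" "j < n" for i j
    by (rule summable_mult[OF summable_sqrt_series[OF that]])
  have t: "t = (\<lambda>k. sqrt_coeff k * q k)"
    unfolding t_def q_def bilinear_form_sum[OF P x x] by (simp add: sum_distrib_left algebra_simps)
  have "x \<bullet> (series_sqrt *\<^sub>v x) = sqrt sqrt_scale * (\<Sum>i<n. \<Sum>j<n. x $ i * x $ j * sqrt_series_entry i j)"
    unfolding bilinear_form_sum[OF series_sqrt_carrier x x]
    by (simp add: series_sqrt_index sum_distrib_left algebra_simps)
  also have "(\<Sum>i<n. \<Sum>j<n. x $ i * x $ j * sqrt_series_entry i j)
      = (\<Sum>i<n. \<Sum>j<n. \<Sum>k. x $ i * x $ j * (sqrt_coeff k * (?B ^\<^sub>m k) $$ (i,j)))"
    unfolding sqrt_series_entry_def using summable_sqrt_series by (intro sum.cong refl suminf_mult[symmetric]) auto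
  also have "\<dots> = (\<Sum>i<n. \<Sum>k. \<Sum>j<n. x $ i * x $ j * (sqrt_coeff k * (?B ^\<^sub>m k) $$ (i,j)))"
    by (intro sum.cong refl suminf_sum[symmetric] sm) auto
  also have "\<dots> = (\<Sum>k. t k)"
    unfolding t_def by (intro suminf_sum[symmetric] summable_sum sm) auto
  finally have eq: "x \<bullet> (series_sqrt *\<^sub>v x) = sqrt sqrt_scale * (\<Sum>k. sqrt_coeff k * q k)"
    unfolding t .
  have sq: "summable (\<lambda>k. sqrt_coeff k * q k)"
    unfolding t[symmetric] t_def by (intro summable_sum sm) auto
  have "suminf sqrt_coeff * (x \<bullet> x) = (\<Sum>k. sqrt_coeff k * (x \<bullet> x))"
    by (rule suminf_mult2[OF summable_sqrt_coeff])
  also have "\<dots> \<le> (\<Sum>k. sqrt_coeff k * q k)"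
  proof (rule suminf_le)
    fix k show "sqrt_coeff k * (x \<bullet> x) \<le> sqrt_coeff k * q k"
    proof (cases k)
      case 0 then show ?thesis using x sqrt_contraction_carrier by (simp add: q_def)
    next
      case (Suc k')
      then show ?thesis
        using pow_sqrt_contraction_form_le[OF x, of k] sqrt_coeff_Suc_nonpos[of k']
        by (simp add: q_def mult_left_mono_neg)
    qed
  qed (use summable_mult2[OF summable_sqrt_coeff] sq in auto)
  finally show ?thesis
    using eq suminf_sqrt_coeff_nonneg scalar_prod_self_nonneg[of x] sqrt_scale_pos
    by (metis mult_nonneg_nonneg order_trans real_sqrt_ge_zero less_imp_le)
qed

lemma psd_series_sqrt: "psd_mat series_sqrt"
  using series_sqrt_carrier symmetric_series_sqrt series_sqrt_form_nonneg unfolding psd_mat_def by auto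

end

text \<open>Uniqueness: with \<open>D = R\<^sub>1 - R\<^sub>2\<close>, the identity \<open>R\<^sub>1 D + D R\<^sub>2 = R\<^sub>1\<^sup>2 - R\<^sub>2\<^sup>2 = 0\<close> gives
  \<open>tr (D R\<^sub>1 D) + tr (D R\<^sub>2 D) = 0\<close>; both traces are sums of PSD forms, so every column of \<open>D\<close>
  lies in the kernels of \<open>R\<^sub>1\<close> and \<open>R\<^sub>2\<close>, whence \<open>D\<^sup>2 = 0\<close> and \<open>D = 0\<close>.\<close>

lemma psd_sqrt_unique:
  assumes R1: "R1 \<in> carrier_mat n n" "psd_mat R1" and R2: "R2 \<in> carrier_mat n n" "psd_mat R2"
    and eq: "R1 * R1 = R2 * R2"
  shows "R1 = R2"
proof -
  define D where "D a b = R1 $$ (a,b) - R2 $$ (a,b)" for a b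
  define S where "S a b = R1 $$ (a,b) + R2 $$ (a,b)" for a b
  have sym1: "R1 $$ (a,b) = R1 $$ (b,a)" and sym2: "R2 $$ (a,b) = R2 $$ (b,a)"
    if "a < n" "b < n" for a b
    using symmetric_matD[OF _ R1(1) that] symmetric_matD[OF _ R2(1) that] R1(2) R2(2)
    unfolding psd_mat_def by blast+
  have D_sym: "D a b = D b a" if "a < n" "b < n" for a b
    unfolding D_def using sym1[OF that] sym2[OF that] by simp
  have anticomm: "(\<Sum>l<n. S k l * D l i) = - (\<Sum>l<n. D k l * S l i)" if "k < n" "i < n" for k i
  proof -
    have "(\<Sum>l<n. S k l * D l i) + (\<Sum>l<n. D k l * S l i)
        = 2 * (\<Sum>l<n. R1 $$ (k,l) * R1 $$ (l,i)) - 2 * (\<Sum>l<n. R2 $$ (k,l) * R2 $$ (l,i))"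
      unfolding sum.distrib[symmetric] sum_distrib_left sum_subtractf[symmetric]
      by (intro sum.cong refl) (simp add: S_def D_def algebra_simps)
    moreover have "(\<Sum>l<n. R1 $$ (k,l) * R1 $$ (l,i)) = (\<Sum>l<n. R2 $$ (k,l) * R2 $$ (l,i))"
      using arg_cong[OF eq, of "\<lambda>M. M $$ (k,i)"] times_mat_index_sum[OF R1(1) R1(1) that]
        times_mat_index_sum[OF R2(1) R2(1) that] by simp
    ultimately show ?thesis by simp
  qed
  define T where "T = (\<Sum>a<n. \<Sum>b<n. \<Sum>c<n. D a b * S b c * D c a)"
  have "T = (\<Sum>a<n. \<Sum>b<n. D a b * (\<Sum>c<n. S b c * D c a))"
    unfolding T_def by (simp add: sum_distrib_left mult.assoc)
  also have "\<dots> = (\<Sum>a<n. \<Sum>b<n. D a b * (- (\<Sum>c<n. D b c * S c a)))"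
    by (intro sum.cong refl) (simp add: anticomm)
  also have "\<dots> = - (\<Sum>a<n. \<Sum>b<n. \<Sum>c<n. D a b * D b c * S c a)"
    by (simp add: sum_distrib_left sum_negf mult.assoc)
  also have "(\<Sum>a<n. \<Sum>b<n. \<Sum>c<n. D a b * D b c * S c a) = T"
  proof -
    have "(\<Sum>a<n. \<Sum>b<n. \<Sum>c<n. D a b * D b c * S c a) = (\<Sum>b<n. \<Sum>c<n. \<Sum>a<n. D a b * D b c * S c a)"
      by (subst sum.swap) (intro sum.cong refl sum.swap)
    thus ?thesis unfolding T_def by (simp add: algebra_simps)
  qed
  finally have T0: "T = 0" by simp
  define v where "v a = vec n (\<lambda>b. D b a)" for a
  have v: "v a \<in> carrier_vec n" for a unfolding v_def by simp
  have "T = (\<Sum>a<n. v a \<bullet> (R1 *\<^sub>v v a) + v a \<bullet> (R2 *\<^sub>v v a))"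
    unfolding bilinear_form_sum[OF R1(1) v v] bilinear_form_sum[OF R2(1) v v] T_def sum.distrib[symmetric]
    by (intro sum.cong refl) (simp add: v_def S_def D_sym algebra_simps)
  hence "\<forall>a\<in>{..<n}. v a \<bullet> (R1 *\<^sub>v v a) + v a \<bullet> (R2 *\<^sub>v v a) = 0"
    using T0 psd_matD[OF R1(2) R1(1) v] psd_matD[OF R2(2) R2(1) v]
    by (subst sum_nonneg_eq_0_iff[symmetric]) (auto intro: add_nonneg_nonneg)
  hence ker: "R1 *\<^sub>v v a = 0\<^sub>v n" "R2 *\<^sub>v v a = 0\<^sub>v n" if "a < n" for a
    using psd_form_eq_0_imp_kernel[OF R1(2) R1(1) v] psd_form_eq_0_imp_kernel[OF R2(2) R2(1) v]
      psd_matD[OF R1(2) R1(1) v, of a] psd_matD[OF R2(2) R2(1) v, of a] that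
    by (metis add_nonneg_eq_0_iff lessThan_iff)+
  have D_sq: "(\<Sum>c<n. D b c * D c a) = 0" if "a < n" "b < n" for a b
  proof -
    have "(R1 *\<^sub>v v a) $ b = (\<Sum>c<n. R1 $$ (b,c) * D c a)"
      and "(R2 *\<^sub>v v a) $ b = (\<Sum>c<n. R2 $$ (b,c) * D c a)"
      using mult_mat_vec_index_sum[OF R1(1) v that(2)] mult_mat_vec_index_sum[OF R2(1) v that(2)]
      unfolding v_def by simp_all
    hence "(\<Sum>c<n. R1 $$ (b,c) * D c a) - (\<Sum>c<n. R2 $$ (b,c) * D c a) = 0"
      using ker[OF that(1)] that by simp
    thus ?thesis unfolding sum_subtractf[symmetric] by (simp add: D_def algebra_simps)
  qed
  have "D a c = 0" if "a < n" "c < n" for a c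
  proof -
    have "(\<Sum>c<n. D a c * D a c) = 0"
      using D_sq[OF that(1) that(1)] D_sym[OF that(1)] by simp
    thus ?thesis using that by (subst (asm) sum_nonneg_eq_0_iff) auto
  qed
  thus ?thesis using R1(1) R2(1) unfolding D_def by (intro eq_matI) auto
qed

lemma psd_sqrt:
  assumes "A \<in> carrier_mat n n" "psd_mat A"
  shows "psd_sqrt A \<in> carrier_mat n n" "psd_mat (psd_sqrt A)" "psd_sqrt A * psd_sqrt A = A"
proof -
  have "\<exists>!R. R \<in> carrier_mat (dim_row A) (dim_row A) \<and> psd_mat R \<and> R * R = A"
    using series_sqrt_carrier[OF assms] psd_series_sqrt[OF assms] series_sqrt_square[OF assms]
      psd_sqrt_unique assms(1) by auto
  from theI'[OF this] show "psd_sqrt A \<in> carrier_mat n n" "psd_mat (psd_sqrt A)"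
    "psd_sqrt A * psd_sqrt A = A"
    unfolding psd_sqrt_def using assms(1) by auto
qed

section \<open>Vector and spectral norms\<close>

lemma vnorm_sq: "(vnorm x)^2 = x \<bullet> x"
  unfolding vnorm_def by (rule real_sqrt_pow2[OF scalar_prod_self_nonneg])

lemma vnorm_nonneg: "0 \<le> vnorm x"
  unfolding vnorm_def by (simp add: scalar_prod_self_nonneg)

lemma vnorm_psd_sqrt_mult_sq:
  assumes "L \<in> carrier_mat n n" "psd_mat L" "u \<in> carrier_vec n"
  shows "(vnorm (psd_sqrt L *\<^sub>v u))^2 = u \<bullet> (L *\<^sub>v u)"
proof -
  have "(psd_sqrt L)\<^sup>T = psd_sqrt L"
    using psd_sqrt(2)[OF assms(1,2)] unfolding psd_mat_def symmetric_mat_def by auto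
  thus ?thesis
    using scalar_prod_gram[OF psd_sqrt(1)[OF assms(1,2)] assms(3)] psd_sqrt(3)[OF assms(1,2)]
    by (simp add: vnorm_sq)
qed

lemma vnorm_mult_mat_vec_le:
  assumes M: "M \<in> carrier_mat m n" and x: "x \<in> carrier_vec n"
  shows "vnorm (M *\<^sub>v x) \<le> sqrt (\<Sum>i<m. (\<Sum>j<n. \<bar>M $$ (i,j)\<bar>)^2) * vnorm x"
proof -
  have x_le: "\<bar>x $ j\<bar> \<le> vnorm x" if "j < n" for j
    using scalar_prod_component_le[OF x that] unfolding vnorm_def by (simp add: real_le_rsqrt)
  have row: "((M *\<^sub>v x) $ i)^2 \<le> (\<Sum>j<n. \<bar>M $$ (i,j)\<bar>)^2 * (x \<bullet> x)" if "i < m" for i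
  proof -
    have "\<bar>(M *\<^sub>v x) $ i\<bar> \<le> (\<Sum>j<n. \<bar>M $$ (i,j) * x $ j\<bar>)"
      unfolding mult_mat_vec_index_sum[OF M x that] by (rule sum_abs)
    also have "\<dots> \<le> (\<Sum>j<n. \<bar>M $$ (i,j)\<bar>) * vnorm x"
      unfolding sum_distrib_right by (intro sum_mono) (simp add: abs_mult mult_left_mono x_le)
    finally have "\<bar>(M *\<^sub>v x) $ i\<bar>^2 \<le> ((\<Sum>j<n. \<bar>M $$ (i,j)\<bar>) * vnorm x)^2"
      by (intro power_mono) auto
    thus ?thesis by (simp add: power_mult_distrib vnorm_sq)
  qed
  have "(M *\<^sub>v x) \<bullet> (M *\<^sub>v x) = (\<Sum>i<m. ((M *\<^sub>v x) $ i)^2)"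
    using M by (simp add: scalar_prod_sum power2_eq_square)
  also have "\<dots> \<le> (\<Sum>i<m. (\<Sum>j<n. \<bar>M $$ (i,j)\<bar>)^2) * (x \<bullet> x)"
    unfolding sum_distrib_right by (intro sum_mono row) auto
  finally have "(vnorm (M *\<^sub>v x))^2 \<le> (sqrt (\<Sum>i<m. (\<Sum>j<n. \<bar>M $$ (i,j)\<bar>)^2) * vnorm x)^2"
    by (simp add: vnorm_sq power_mult_distrib sum_nonneg)
  thus ?thesis
    by (rule power2_le_imp_le) (simp add: vnorm_nonneg sum_nonneg)
qed

lemma bdd_above_spec_norm_set:
  "bdd_above {vnorm (M *\<^sub>v x) | x. x \<in> carrier_vec (dim_col M) \<and> vnorm x \<le> 1}"
proof (rule bdd_aboveI, safe)
  let ?K = "sqrt (\<Sum>i<dim_row M. (\<Sum>j<dim_col M. \<bar>M $$ (i,j)\<bar>)^2)"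
  fix x :: "real vec" assume x: "x \<in> carrier_vec (dim_col M)" "vnorm x \<le> 1"
  have "vnorm (M *\<^sub>v x) \<le> ?K * vnorm x" by (rule vnorm_mult_mat_vec_le[OF _ x(1)]) simp
  also have "\<dots> \<le> ?K" using x(2) by (intro mult_left_le) (auto intro!: sum_nonneg)
  finally show "vnorm (M *\<^sub>v x) \<le> ?K" .
qed

lemma spec_norm_upper:
  "x \<in> carrier_vec (dim_col M) \<Longrightarrow> vnorm x \<le> 1 \<Longrightarrow> vnorm (M *\<^sub>v x) \<le> spec_norm M"
  unfolding spec_norm_def by (rule cSup_upper[OF _ bdd_above_spec_norm_set]) auto

lemma spec_norm_nonneg: "0 \<le> spec_norm M"
proof -
  have "vnorm (M *\<^sub>v 0\<^sub>v (dim_col M)) \<le> spec_norm M"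
    by (rule spec_norm_upper) (simp_all add: vnorm_def)
  thus ?thesis by (rule order.trans[OF vnorm_nonneg])
qed

lemma spec_norm_least:
  assumes "\<And>x. x \<in> carrier_vec (dim_col M) \<Longrightarrow> vnorm x \<le> 1 \<Longrightarrow> vnorm (M *\<^sub>v x) \<le> K"
  shows "spec_norm M \<le> K"
proof -
  have "vnorm (0\<^sub>v (dim_col M)) \<le> 1" by (simp add: vnorm_def)
  hence "{vnorm (M *\<^sub>v x) | x. x \<in> carrier_vec (dim_col M) \<and> vnorm x \<le> 1} \<noteq> {}"
    using zero_carrier_vec by blast
  thus ?thesis unfolding spec_norm_def by (rule cSup_least) (use assms in blast)
qed

lemma spec_norm_sq_le_sum:
  assumes cols: "\<And>r. r \<in> I \<Longrightarrow> dim_col (M' r) = dim_col M"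
    and le: "\<And>x. x \<in> carrier_vec (dim_col M) \<Longrightarrow> (vnorm (M *\<^sub>v x))^2 \<le> (\<Sum>r\<in>I. (vnorm (M' r *\<^sub>v x))^2)"
  shows "(spec_norm M)^2 \<le> (\<Sum>r\<in>I. (spec_norm (M' r))^2)"
proof -
  define K where "K = (\<Sum>r\<in>I. (spec_norm (M' r))^2)"
  have "spec_norm M \<le> sqrt K"
  proof (rule spec_norm_least)
    fix x assume x: "x \<in> carrier_vec (dim_col M)" "vnorm x \<le> 1"
    have "(vnorm (M' r *\<^sub>v x))^2 \<le> (spec_norm (M' r))^2" if "r \<in> I" for r
      using spec_norm_upper[of x "M' r"] cols[OF that] x by (intro power_mono) (auto simp: vnorm_nonneg)
    hence "(\<Sum>r\<in>I. (vnorm (M' r *\<^sub>v x))^2) \<le> K" unfolding K_def by (rule sum_mono)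
    hence "(vnorm (M *\<^sub>v x))^2 \<le> K" using le[OF x(1)] by linarith
    thus "vnorm (M *\<^sub>v x) \<le> sqrt K" by (simp add: real_le_rsqrt)
  qed
  hence "(spec_norm M)^2 \<le> (sqrt K)^2" by (rule power_mono[OF _ spec_norm_nonneg])
  also have "\<dots> = K" unfolding K_def by (simp add: sum_nonneg)
  finally show ?thesis unfolding K_def .
qed

section \<open>Laplacians\<close>

lemma laplacian_carrier: "laplacian V \<in> carrier_mat (dim_row V) (dim_row V)"
  unfolding laplacian_def by simp

lemma laplacian_index: "i < dim_row V \<Longrightarrow> j < dim_row V \<Longrightarrow> laplacian V $$ (i,j) =
   (if i = j then (\<Sum>k\<in>{..<dim_row V} - {i}. V $$ (i,k)) else - V $$ (i,j))"
  unfolding laplacian_def by simp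

lemma laplacian_row_sum: assumes "i < dim_row V" shows "(\<Sum>j<dim_row V. laplacian V $$ (i,j)) = 0"
proof -
  have "(\<Sum>j<dim_row V. laplacian V $$ (i,j))
      = laplacian V $$ (i,i) + (\<Sum>j\<in>{..<dim_row V} - {i}. laplacian V $$ (i,j))"
    using assms by (subst sum.remove[of _ i]) auto
  also have "(\<Sum>j\<in>{..<dim_row V} - {i}. laplacian V $$ (i,j)) = (\<Sum>j\<in>{..<dim_row V} - {i}. - V $$ (i,j))"
    using assms by (intro sum.cong refl) (auto simp: laplacian_index)
  finally show ?thesis using assms by (simp add: laplacian_index sum_negf)
qed

lemma symmetric_laplacian:
  assumes "symmetric_mat V" "V \<in> carrier_mat n n" shows "symmetric_mat (laplacian V)"
proof -
  have "laplacian V $$ (j,i) = laplacian V $$ (i,j)" if "i < n" "j < n" for i j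
    using that assms(2) symmetric_matD[OF assms that(2,1)] by (cases "i = j") (simp_all add: laplacian_index)
  thus ?thesis unfolding symmetric_mat_def using assms(2) by (intro eq_matI) (auto simp: laplacian_def)
qed

lemma zero_row_sum_form:
  assumes M: "M \<in> carrier_mat n n" "symmetric_mat M"
    and rows: "\<And>i. i < n \<Longrightarrow> (\<Sum>j<n. M $$ (i,j)) = 0" and z: "z \<in> carrier_vec n"
  shows "z \<bullet> (M *\<^sub>v z) = - (1/2) * (\<Sum>i<n. \<Sum>j<n. M $$ (i,j) * (z $ i - z $ j)^2)"
proof -
  have cols: "(\<Sum>i<n. M $$ (i,j)) = 0" if "j < n" for j
    using rows[OF that] symmetric_matD[OF M(2,1) _ that] by (metis (no_types, lifting) lessThan_iff sum.cong)
  have "(\<Sum>i<n. \<Sum>j<n. M $$ (i,j) * (z $ i - z $ j)^2)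
     = (\<Sum>i<n. \<Sum>j<n. M $$ (i,j) * (z $ i)^2) + (\<Sum>i<n. \<Sum>j<n. M $$ (i,j) * (z $ j)^2)
       - 2 * (\<Sum>i<n. \<Sum>j<n. z $ i * M $$ (i,j) * z $ j)"
    unfolding sum_distrib_left sum.distrib[symmetric] sum_subtractf[symmetric]
    by (intro sum.cong refl) (simp add: power2_eq_square algebra_simps)
  also have "(\<Sum>i<n. \<Sum>j<n. M $$ (i,j) * (z $ i)^2) = 0"
    by (simp add: sum_distrib_right[symmetric] rows)
  also have "(\<Sum>i<n. \<Sum>j<n. M $$ (i,j) * (z $ j)^2) = 0"
    by (subst sum.swap) (simp add: sum_distrib_right[symmetric] cols)
  finally show ?thesis using bilinear_form_sum[OF M(1) z z] by simp
qed

lemma laplacian_form: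
  assumes V: "V \<in> carrier_mat n n" "symmetric_mat V" and z: "z \<in> carrier_vec n"
  shows "z \<bullet> (laplacian V *\<^sub>v z) = (1/2) * (\<Sum>i<n. \<Sum>j<n. (if i = j then 0 else V $$ (i,j)) * (z $ i - z $ j)^2)"
proof -
  have L: "laplacian V \<in> carrier_mat n n" using laplacian_carrier[of V] V by simp
  have "z \<bullet> (laplacian V *\<^sub>v z) = - (1/2) * (\<Sum>i<n. \<Sum>j<n. laplacian V $$ (i,j) * (z $ i - z $ j)^2)"
    by (rule zero_row_sum_form[OF L symmetric_laplacian[OF V(2,1)] _ z])
      (use laplacian_row_sum[of _ V] V in auto)
  also have "(\<Sum>i<n. \<Sum>j<n. laplacian V $$ (i,j) * (z $ i - z $ j)^2)
     = - (\<Sum>i<n. \<Sum>j<n. (if i = j then 0 else V $$ (i,j)) * (z $ i - z $ j)^2)"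
    unfolding sum_negf[symmetric] by (intro sum.cong refl) (use V in \<open>auto simp: laplacian_index\<close>)
  finally show ?thesis by simp
qed

lemma psd_laplacian:
  assumes V: "weight_matrix n V"
  shows "psd_mat (laplacian V)"
proof -
  have V': "V \<in> carrier_mat n n" "symmetric_mat V" using V unfolding weight_matrix_def by auto
  have "0 \<le> z \<bullet> (laplacian V *\<^sub>v z)" if z: "z \<in> carrier_vec n" for z
    unfolding laplacian_form[OF V' z] using V unfolding weight_matrix_def
    by (intro mult_nonneg_nonneg sum_nonneg) auto
  thus ?thesis using laplacian_carrier[of V] V' symmetric_laplacian[OF V'(2,1)] unfolding psd_mat_def by auto
qed

text \<open>Laplacians \<open>D - W\<close> of nonnegative weights \<open>W\<close>, characterised without reference to \<open>W\<close>.\<close>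

definition is_laplacian :: "nat \<Rightarrow> real mat \<Rightarrow> bool" where
  "is_laplacian n L \<longleftrightarrow> L \<in> carrier_mat n n \<and> symmetric_mat L \<and>
     (\<forall>i<n. (\<Sum>j<n. L $$ (i,j)) = 0) \<and> (\<forall>i<n. \<forall>j<n. i \<noteq> j \<longrightarrow> L $$ (i,j) \<le> 0)"

lemma is_laplacian_laplacian: "weight_matrix n W \<Longrightarrow> is_laplacian n (laplacian W)"
  unfolding is_laplacian_def weight_matrix_def
  using laplacian_carrier[of W] symmetric_laplacian[of W n] laplacian_row_sum[of _ W]
  by (auto simp: laplacian_index)

lemma weights_of_index:
  "L \<in> carrier_mat n n \<Longrightarrow> i < n \<Longrightarrow> j < n \<Longrightarrow> weights_of L $$ (i,j) = (if i = j then 0 else - L $$ (i,j))"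
  unfolding weights_of_def by simp

lemma weight_matrix_weights_of:
  assumes L: "is_laplacian n L" shows "weight_matrix n (weights_of L)"
proof -
  have L': "L \<in> carrier_mat n n" "symmetric_mat L"
    and off: "\<And>i j. i < n \<Longrightarrow> j < n \<Longrightarrow> i \<noteq> j \<Longrightarrow> L $$ (i,j) \<le> 0"
    using L unfolding is_laplacian_def by auto
  have car: "weights_of L \<in> carrier_mat n n" using L'(1) by (simp add: weights_of_def)
  have "(weights_of L)\<^sup>T = weights_of L"
    by (rule eq_matI)
      (use car L'(1) symmetric_matD[OF L'(2,1)] in \<open>auto simp: weights_of_index[OF L'(1)]\<close>)
  thus ?thesis
    using car off unfolding weight_matrix_def symmetric_mat_def
    by (auto simp: weights_of_index[OF L'(1)])
qed

lemma is_laplacian_form: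
  assumes L: "is_laplacian n L" and z: "z \<in> carrier_vec n"
  shows "z \<bullet> (L *\<^sub>v z) = (1/2) * (\<Sum>i<n. \<Sum>j<n. weights_of L $$ (i,j) * (z $ i - z $ j)^2)"
proof -
  have L': "L \<in> carrier_mat n n" "symmetric_mat L" using L unfolding is_laplacian_def by auto
  have "z \<bullet> (L *\<^sub>v z) = - (1/2) * (\<Sum>i<n. \<Sum>j<n. L $$ (i,j) * (z $ i - z $ j)^2)"
    by (rule zero_row_sum_form[OF L' _ z]) (use L in \<open>auto simp: is_laplacian_def\<close>)
  also have "(\<Sum>i<n. \<Sum>j<n. L $$ (i,j) * (z $ i - z $ j)^2)
      = - (\<Sum>i<n. \<Sum>j<n. weights_of L $$ (i,j) * (z $ i - z $ j)^2)"
    unfolding sum_negf[symmetric] by (intro sum.cong refl) (auto simp: weights_of_index[OF L'(1)])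
  finally show ?thesis by simp
qed

lemma coarsen_index:
  fixes f :: "nat \<Rightarrow> nat" and L :: "real mat"
  assumes L: "L \<in> carrier_mat n n" and r: "r < n'" and s: "s < n'"
  defines "P \<equiv> mat n n' (\<lambda>(i,r). if f i = r then 1 else 0)"
  shows "(P\<^sup>T * L * P) $$ (r,s) = (\<Sum>i<n. \<Sum>j<n. if f i = r \<and> f j = s then L $$ (i,j) else 0)"
proof -
  have PT: "P\<^sup>T \<in> carrier_mat n' n" and P: "P \<in> carrier_mat n n'" by (simp_all add: P_def)
  have "(P\<^sup>T * L * P) $$ (r,s) = (\<Sum>j<n. (P\<^sup>T * L) $$ (r,j) * P $$ (j,s))"
    by (rule times_mat_index_sum[OF mult_carrier_mat[OF PT L] P r s])
  also have "\<dots> = (\<Sum>j<n. (\<Sum>i<n. (if f i = r then 1 else 0) * L $$ (i,j)) * (if f j = s then 1 else 0))"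
    using r s by (intro sum.cong refl) (simp add: times_mat_index_sum[OF PT L r]; simp add: P_def)
  also have "\<dots> = (\<Sum>i<n. \<Sum>j<n. if f i = r \<and> f j = s then L $$ (i,j) else 0)"
    unfolding sum_distrib_right by (subst sum.swap) (intro sum.cong refl; auto)
  finally show ?thesis .
qed

lemma is_laplacian_coarsen:
  fixes f :: "nat \<Rightarrow> nat"
  assumes L: "is_laplacian n L" and f: "\<And>i. i < n \<Longrightarrow> f i < n'"
  defines "P \<equiv> mat n n' (\<lambda>(i,r). if f i = r then 1 else 0)"
  shows "is_laplacian n' (P\<^sup>T * L * P)"
proof -
  have L': "L \<in> carrier_mat n n" "symmetric_mat L"
    and rows: "\<And>i. i < n \<Longrightarrow> (\<Sum>j<n. L $$ (i,j)) = 0"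
    and off: "\<And>i j. i < n \<Longrightarrow> j < n \<Longrightarrow> i \<noteq> j \<Longrightarrow> L $$ (i,j) \<le> 0"
    using L unfolding is_laplacian_def by auto
  let ?L = "P\<^sup>T * L * P"
  have idx: "?L $$ (r,s) = (\<Sum>i<n. \<Sum>j<n. if f i = r \<and> f j = s then L $$ (i,j) else 0)"
    if "r < n'" "s < n'" for r s
    unfolding P_def by (rule coarsen_index[OF L'(1) that])
  have car: "?L \<in> carrier_mat n' n'"
    unfolding P_def by (rule mult_carrier_mat[OF mult_carrier_mat[OF _ L'(1)]]) auto
  have "?L $$ (s,r) = ?L $$ (r,s)" if "r < n'" "s < n'" for r s
    unfolding idx[OF that] idx[OF that(2,1)]
    by (subst sum.swap) (use symmetric_matD[OF L'(2,1)] in \<open>auto intro!: sum.cong\<close>)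
  hence sym: "symmetric_mat ?L"
    unfolding symmetric_mat_def using car by (intro eq_matI) auto
  have "(\<Sum>s<n'. ?L $$ (r,s)) = 0" if r: "r < n'" for r
  proof -
    have "(\<Sum>s<n'. ?L $$ (r,s)) = (\<Sum>i<n. \<Sum>j<n. \<Sum>s<n'. if f i = r \<and> f j = s then L $$ (i,j) else 0)"
      using idx r by (simp add: sum.swap[of _ "{..<n'}"])
    also have "\<dots> = (\<Sum>i<n. \<Sum>j<n. if f i = r then L $$ (i,j) else 0)"
    proof (intro sum.cong refl)
      fix i j assume "j \<in> {..<n}"
      hence fj: "f j \<in> {..<n'}" using f by auto
      have "(\<Sum>s<n'. if f i = r \<and> f j = s then L $$ (i,j) else 0)
          = (\<Sum>s<n'. if f j = s then (if f i = r then L $$ (i,j) else 0) else 0)"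
        by (intro sum.cong) auto
      thus "(\<Sum>s<n'. if f i = r \<and> f j = s then L $$ (i,j) else 0) = (if f i = r then L $$ (i,j) else 0)"
        using fj by (simp add: sum.delta')
    qed
    also have "\<dots> = 0"
    proof (rule sum.neutral, rule ballI)
      fix i assume "i \<in> {..<n}"
      thus "(\<Sum>j<n. if f i = r then L $$ (i,j) else 0) = 0" using rows by (cases "f i = r") auto
    qed
    finally show ?thesis .
  qed
  moreover have "?L $$ (r,s) \<le> 0" if "r < n'" "s < n'" "r \<noteq> s" for r s
    unfolding idx[OF that(1,2)] using off that(3) by (intro sum_nonpos) auto
  ultimately show ?thesis using car sym unfolding is_laplacian_def by auto
qed

lemma is_laplacian_Llev:
  assumes W: "weight_matrix (N 0) W"
    and range: "\<And>j. 1 \<le> j \<Longrightarrow> j \<le> m \<Longrightarrow> \<phi> j ` {..<N (j - 1)} \<subseteq> {..<N j}"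
  shows "is_laplacian (N m) (Llev (laplacian W) N \<phi> m)"
  using range
proof (induction m)
  case 0
  show ?case using is_laplacian_laplacian[OF W] by simp
next
  case (Suc m)
  have "is_laplacian (N m) (Llev (laplacian W) N \<phi> m)" using Suc by simp
  moreover have "\<phi> (Suc m) i < N (Suc m)" if "i < N m" for i using Suc.prems[of "Suc m"] that by auto
  ultimately show ?case by (simp add: Pplus_def is_laplacian_coarsen)
qed

section \<open>Local Laplacians of a partition\<close>

definition restrict_vec :: "nat set \<Rightarrow> real vec \<Rightarrow> real vec" where
  "restrict_vec C z = vec (dim_vec z) (\<lambda>i. if i \<in> C then z $ i else 0)"

lemma L_C_carrier: "V \<in> carrier_mat n n \<Longrightarrow> L_C V C \<in> carrier_mat n n"
  unfolding L_C_def W_C_def laplacian_def by simp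

lemma weight_matrix_W_C:
  assumes V: "weight_matrix n V" shows "weight_matrix n (W_C V C)"
proof -
  have V': "V \<in> carrier_mat n n" "symmetric_mat V" "\<And>i j. i < n \<Longrightarrow> j < n \<Longrightarrow> 0 \<le> V $$ (i,j)"
    "\<And>i. i < n \<Longrightarrow> V $$ (i,i) = 0"
    using V unfolding weight_matrix_def by auto
  have sym: "V $$ (j,i) = V $$ (i,j)" if "i < n" "j < n" for i j
    using symmetric_matD[OF V'(2,1) that(2,1)] .
  have "(W_C V C)\<^sup>T = W_C V C"
    by (rule eq_matI) (use V'(1) in \<open>auto simp: W_C_def sym\<close>)
  thus ?thesis using V' unfolding weight_matrix_def symmetric_mat_def by (auto simp: W_C_def)
qed

lemma psd_L_C: "weight_matrix n V \<Longrightarrow> psd_mat (L_C V C)"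
  unfolding L_C_def by (rule psd_laplacian[OF weight_matrix_W_C])

lemma L_C_form:
  assumes V: "weight_matrix n V" and u: "u \<in> carrier_vec n"
  shows "u \<bullet> (L_C V C *\<^sub>v u)
    = (1/2) * (\<Sum>i<n. \<Sum>j<n. (if i = j then 0 else W_C V C $$ (i,j)) * (u $ i - u $ j)^2)"
  using weight_matrix_W_C[OF V, of C] unfolding L_C_def weight_matrix_def
  by (intro laplacian_form[OF _ _ u]) auto

lemma W_C_index_fiber:
  assumes "dim_row V = n" "i < n" "j < n"
  shows "W_C V {k. k < n \<and> f k = r} $$ (i,j) =
    (if f i = r \<and> f j = r then V $$ (i,j) else if f i = r \<or> f j = r then 2 * V $$ (i,j) else 0)"
  using assms unfolding W_C_def by simp

text \<open>An edge between two different fibres is charged twice, once to each endpoint's fibre.\<close>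

lemma edge_term_le_local_terms:
  fixes f :: "nat \<Rightarrow> nat" and z :: "nat \<Rightarrow> real"
  assumes V: "weight_matrix n V" and f: "\<And>i. i < n \<Longrightarrow> f i < n'" and ij: "i < n" "j < n"
  shows "V $$ (i,j) * (z i - z j)^2 \<le>
    (\<Sum>r<n'. (if i = j then 0 else W_C V {k. k < n \<and> f k = r} $$ (i,j))
        * ((if f i = r then z i else 0) - (if f j = r then z j else 0))^2)"
    (is "?w * _ \<le> (\<Sum>r<n'. ?G r)")
proof -
  have dV: "dim_row V = n" and w: "0 \<le> ?w" using V ij unfolding weight_matrix_def by auto
  have G: "?G r = (if i = j then 0 else if f i = r \<and> f j = r then ?w * (z i - z j)^2
      else if f i = r then 2 * ?w * (z i)^2 else if f j = r then 2 * ?w * (z j)^2 else 0)" for r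
    using W_C_index_fiber[OF dV ij, of f r] by auto
  have G_nonneg: "0 \<le> ?G r" for r using w unfolding G by simp
  have a: "f i \<in> {..<n'}" and b: "f j \<in> {..<n'}" using f ij by auto
  show ?thesis
  proof (cases "i = j \<or> f i = f j")
    case True
    hence "?w * (z i - z j)^2 = ?G (f i)" using V ij unfolding G weight_matrix_def by auto
    also have "\<dots> \<le> (\<Sum>r<n'. ?G r)" by (rule member_le_sum[OF a G_nonneg]) simp
    finally show ?thesis .
  next
    case False
    have "?w * (z i - z j)^2 \<le> 2 * ?w * (z i)^2 + 2 * ?w * (z j)^2"
    proof -
      have "(z i - z j)^2 \<le> 2 * (z i)^2 + 2 * (z j)^2"
        using zero_le_power2[of "z i + z j"] by (simp add: power2_eq_square algebra_simps)
      from mult_left_mono[OF this w] show ?thesis by (simp add: algebra_simps)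
    qed
    also have "\<dots> = (\<Sum>r\<in>{f i, f j}. ?G r)" using False unfolding G by simp
    also have "\<dots> \<le> (\<Sum>r<n'. ?G r)" by (rule sum_mono2[OF finite_lessThan _ G_nonneg]) (use a b in auto)
    finally show ?thesis .
  qed
qed

lemma laplacian_form_le_local_forms:
  fixes f :: "nat \<Rightarrow> nat"
  assumes L: "is_laplacian n L" and f: "\<And>i. i < n \<Longrightarrow> f i < n'" and z: "z \<in> carrier_vec n"
  shows "z \<bullet> (L *\<^sub>v z) \<le> (\<Sum>r<n'. restrict_vec {i. i < n \<and> f i = r} z \<bullet>
           (L_C (weights_of L) {i. i < n \<and> f i = r} *\<^sub>v restrict_vec {i. i < n \<and> f i = r} z))"
proof -
  let ?V = "weights_of L"
  let ?C = "\<lambda>r. {i. i < n \<and> f i = r}"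
  let ?u = "\<lambda>r. restrict_vec (?C r) z"
  let ?WC = "\<lambda>r. W_C ?V (?C r)"
  have V: "weight_matrix n ?V" by (rule weight_matrix_weights_of[OF L])
  have u: "?u r \<in> carrier_vec n" for r using z unfolding restrict_vec_def by simp
  have u_index: "?u r $ i = (if f i = r then z $ i else 0)" if "i < n" for r i
    using z that unfolding restrict_vec_def by simp
  have "z \<bullet> (L *\<^sub>v z) = (1/2) * (\<Sum>i<n. \<Sum>j<n. ?V $$ (i,j) * (z $ i - z $ j)^2)"
    by (rule is_laplacian_form[OF L z])
  also have "\<dots> \<le> (1/2) * (\<Sum>i<n. \<Sum>j<n. \<Sum>r<n'.
      (if i = j then 0 else ?WC r $$ (i,j)) * (?u r $ i - ?u r $ j)^2)"
  proof (intro mult_left_mono sum_mono)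
    fix i j assume "i \<in> {..<n}" "j \<in> {..<n}"
    thus "?V $$ (i,j) * (z $ i - z $ j)^2
        \<le> (\<Sum>r<n'. (if i = j then 0 else ?WC r $$ (i,j)) * (?u r $ i - ?u r $ j)^2)"
      using edge_term_le_local_terms[OF V f, where i = i and j = j and z = "\<lambda>k. z $ k"]
      by (simp add: u_index)
  qed simp
  also have "(\<Sum>i<n. \<Sum>j<n. \<Sum>r<n'. (if i = j then 0 else ?WC r $$ (i,j)) * (?u r $ i - ?u r $ j)^2)
      = (\<Sum>r<n'. \<Sum>i<n. \<Sum>j<n. (if i = j then 0 else ?WC r $$ (i,j)) * (?u r $ i - ?u r $ j)^2)"
  proof -
    have "(\<Sum>i<n. \<Sum>j<n. \<Sum>r<n'. (if i = j then 0 else ?WC r $$ (i,j)) * (?u r $ i - ?u r $ j)^2)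
        = (\<Sum>i<n. \<Sum>r<n'. \<Sum>j<n. (if i = j then 0 else ?WC r $$ (i,j)) * (?u r $ i - ?u r $ j)^2)"
      by (intro sum.cong refl sum.swap)
    also have "\<dots> = (\<Sum>r<n'. \<Sum>i<n. \<Sum>j<n. (if i = j then 0 else ?WC r $$ (i,j)) * (?u r $ i - ?u r $ j)^2)"
      by (rule sum.swap)
    finally show ?thesis .
  qed
  also have "(1/2) * \<dots> = (\<Sum>r<n'. ?u r \<bullet> (L_C ?V (?C r) *\<^sub>v ?u r))"
    by (simp add: L_C_form[OF V u] sum_distrib_left)
  finally show ?thesis .
qed

lemma Pi_perp_carrier: "Pi_perp N \<phi> (Suc m) \<in> carrier_mat (N m) (N m)"
  unfolding Pi_perp_def Pplus_def Pmat_def by (intro minus_carrier_mat) auto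

lemma Pi_perp_index:
  assumes range: "\<And>i. i < N m \<Longrightarrow> \<phi> (Suc m) i < N (Suc m)" and ij: "i < N m" "j < N m"
  shows "Pi_perp N \<phi> (Suc m) $$ (i,j) = (if i = j then 1 else 0) -
     (if \<phi> (Suc m) j = \<phi> (Suc m) i then 1 / real (card (contraction_set N \<phi> (Suc m) (\<phi> (Suc m) i))) else 0)"
proof -
  have "(Pplus N \<phi> (Suc m) * Pmat N \<phi> (Suc m)) $$ (i,j) = (\<Sum>r<N (Suc m). Pplus N \<phi> (Suc m) $$ (i,r) * Pmat N \<phi> (Suc m) $$ (r,j))"
    by (rule times_mat_index_sum[of _ "N m" "N (Suc m)" _ "N m"]) (use ij in \<open>simp_all add: Pplus_def Pmat_def\<close>)
  also have "\<dots> = (\<Sum>r<N (Suc m). if \<phi> (Suc m) i = r then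
      (if \<phi> (Suc m) j = r then 1 / real (card (contraction_set N \<phi> (Suc m) r)) else 0) else 0)"
    using ij by (intro sum.cong refl) (auto simp: Pplus_def Pmat_def)
  also have "\<dots> = (if \<phi> (Suc m) j = \<phi> (Suc m) i then 1 / real (card (contraction_set N \<phi> (Suc m) (\<phi> (Suc m) i))) else 0)"
    using range[OF ij(1)] by (simp add: sum.delta')
  finally show ?thesis using ij by (simp add: Pi_perp_def Pplus_def Pmat_def)
qed

lemma Pi_C_perp_mult_vec:
  assumes range: "\<And>i. i < N m \<Longrightarrow> \<phi> (Suc m) i < N (Suc m)" and y: "y \<in> carrier_vec (N m)"
  shows "Pi_C_perp (N m) (contraction_set N \<phi> (Suc m) r) *\<^sub>v y
    = restrict_vec (contraction_set N \<phi> (Suc m) r) (Pi_perp N \<phi> (Suc m) *\<^sub>v y)"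
proof (rule eq_vecI)
  let ?PC = "Pi_C_perp (N m) (contraction_set N \<phi> (Suc m) r)"
  have PC: "?PC \<in> carrier_mat (N m) (N m)" by (simp add: Pi_C_perp_def)
  fix i assume "i < dim_vec (restrict_vec (contraction_set N \<phi> (Suc m) r) (Pi_perp N \<phi> (Suc m) *\<^sub>v y))"
  hence i: "i < N m" using carrier_matD(1)[OF Pi_perp_carrier[of N \<phi> m]] by (simp add: restrict_vec_def)
  have PC_index: "?PC $$ (i,j) = (if \<phi> (Suc m) i = r then Pi_perp N \<phi> (Suc m) $$ (i,j) else 0)"
    if j: "j < N m" for j
    using Pi_perp_index[where N = N and \<phi> = \<phi> and m = m, OF range i j] i j
    by (auto simp: Pi_C_perp_def contraction_set_def)
  have "(?PC *\<^sub>v y) $ i = (\<Sum>j<N m. ?PC $$ (i,j) * y $ j)"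
    by (rule mult_mat_vec_index_sum[OF PC y i])
  also have "\<dots> = (\<Sum>j<N m. (if \<phi> (Suc m) i = r then Pi_perp N \<phi> (Suc m) $$ (i,j) else 0) * y $ j)"
    by (intro sum.cong refl) (simp add: PC_index)
  also have "\<dots> = (if \<phi> (Suc m) i = r then (\<Sum>j<N m. Pi_perp N \<phi> (Suc m) $$ (i,j) * y $ j) else 0)"
    by (cases "\<phi> (Suc m) i = r") simp_all
  also have "\<dots> = restrict_vec (contraction_set N \<phi> (Suc m) r) (Pi_perp N \<phi> (Suc m) *\<^sub>v y) $ i"
    using i Pi_perp_carrier[of N \<phi> m]
    by (simp add: restrict_vec_def contraction_set_def mult_mat_vec_index_sum[OF Pi_perp_carrier[of N \<phi> m] y i])
  finally show "(?PC *\<^sub>v y) $ i = restrict_vec (contraction_set N \<phi> (Suc m) r) (Pi_perp N \<phi> (Suc m) *\<^sub>v y) $ i" .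
qed (simp add: restrict_vec_def Pi_C_perp_def carrier_matD[OF Pi_perp_carrier[of N \<phi> m]])

lemma coarsening_error_le_local_errors:
  assumes L: "is_laplacian (N m) L" and range: "\<And>i. i < N m \<Longrightarrow> \<phi> (Suc m) i < N (Suc m)"
    and S: "S \<in> carrier_mat (dim_row S) (N m)" "S\<^sup>T * S = L" and y: "y \<in> carrier_vec (N m)"
  shows "(vnorm (S *\<^sub>v (Pi_perp N \<phi> (Suc m) *\<^sub>v y)))^2 \<le> (\<Sum>r<N (Suc m).
    (vnorm (psd_sqrt (L_C (weights_of L) (contraction_set N \<phi> (Suc m) r))
      *\<^sub>v (Pi_C_perp (N m) (contraction_set N \<phi> (Suc m) r) *\<^sub>v y)))^2)"
proof -
  let ?n = "N m"
  let ?C = "contraction_set N \<phi> (Suc m)"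
  define z where "z = Pi_perp N \<phi> (Suc m) *\<^sub>v y"
  have z: "z \<in> carrier_vec ?n" unfolding z_def by (rule mult_mat_vec_carrier[OF Pi_perp_carrier[of N \<phi> m] y])
  have V: "weight_matrix ?n (weights_of L)" by (rule weight_matrix_weights_of[OF L])
  have "(vnorm (S *\<^sub>v z))^2 = z \<bullet> (L *\<^sub>v z)"
    unfolding vnorm_sq scalar_prod_gram[OF S(1) z] S(2) ..
  also have "\<dots> \<le> (\<Sum>r<N (Suc m). restrict_vec (?C r) z \<bullet> (L_C (weights_of L) (?C r) *\<^sub>v restrict_vec (?C r) z))"
    unfolding contraction_set_def diff_Suc_1 by (rule laplacian_form_le_local_forms[OF L range z])
  also have "\<dots> = (\<Sum>r<N (Suc m). (vnorm (psd_sqrt (L_C (weights_of L) (?C r)) *\<^sub>v restrict_vec (?C r) z))^2)"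
    using z V by (intro sum.cong refl vnorm_psd_sqrt_mult_sq[symmetric] L_C_carrier psd_L_C)
      (auto simp: restrict_vec_def weight_matrix_def)
  finally show ?thesis
    by (simp add: z_def Pi_C_perp_mult_vec[where N = N and \<phi> = \<phi> and m = m, OF range y])
qed

lemma coarsening_error_mult_le_local_errors:
  assumes L: "is_laplacian (N m) L" and range: "\<And>i. i < N m \<Longrightarrow> \<phi> (Suc m) i < N (Suc m)"
    and S: "S \<in> carrier_mat (dim_row S) (N m)" "S\<^sup>T * S = L"
    and A: "A \<in> carrier_mat (N m) k" and x: "x \<in> carrier_vec k"
  shows "(vnorm (S * Pi_perp N \<phi> (Suc m) * A *\<^sub>v x))^2 \<le> (\<Sum>r<N (Suc m).
    (vnorm (psd_sqrt (L_C (weights_of L) (contraction_set N \<phi> (Suc m) r))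
      * (Pi_C_perp (N m) (contraction_set N \<phi> (Suc m) r) * A) *\<^sub>v x))^2)"
proof -
  let ?R = "\<lambda>r. psd_sqrt (L_C (weights_of L) (contraction_set N \<phi> (Suc m) r))"
  let ?PC = "\<lambda>r. Pi_C_perp (N m) (contraction_set N \<phi> (Suc m) r)"
  have R: "?R r \<in> carrier_mat (N m) (N m)" for r
    using psd_sqrt(1)[OF L_C_carrier psd_L_C] weight_matrix_weights_of[OF L]
    unfolding weight_matrix_def by blast
  have PC: "?PC r \<in> carrier_mat (N m) (N m)" for r by (simp add: Pi_C_perp_def)
  have Pi: "Pi_perp N \<phi> (Suc m) \<in> carrier_mat (N m) (N m)" by (rule Pi_perp_carrier)
  have Ax: "A *\<^sub>v x \<in> carrier_vec (N m)" by (rule mult_mat_vec_carrier[OF A x])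
  have "S * Pi_perp N \<phi> (Suc m) * A *\<^sub>v x = S *\<^sub>v (Pi_perp N \<phi> (Suc m) *\<^sub>v (A *\<^sub>v x))"
    by (simp only: assoc_mult_mat_vec[OF mult_carrier_mat[OF S(1) Pi] A x] assoc_mult_mat_vec[OF S(1) Pi Ax])
  moreover have "?R r * (?PC r * A) *\<^sub>v x = ?R r *\<^sub>v (?PC r *\<^sub>v (A *\<^sub>v x))" for r
    by (simp only: assoc_mult_mat_vec[OF R[of r] mult_carrier_mat[OF PC[of r] A] x]
        assoc_mult_mat_vec[OF PC[of r] A x])
  ultimately show ?thesis
    using coarsening_error_le_local_errors[where \<phi> = \<phi>, OF L range S Ax] by simp
qed

lemma dim_row_Alev: "V \<in> carrier_mat (N 0) k \<Longrightarrow> dim_row (Alev L V N \<phi> m) = N m"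
  by (cases m) (simp_all add: Alev_def Pmat_def)

theorem proposition5:
  fixes W :: "real mat" and N :: "nat \<Rightarrow> nat" and \<phi> :: "nat \<Rightarrow> nat \<Rightarrow> nat"
    and V :: "real mat" and k :: nat and S :: "real mat" and l :: nat
  assumes graph: "weight_matrix (N 0) W"
    and connected: "induces_connected W {..<N 0}"
    and V_basis: "V \<in> carrier_mat (N 0) k" "V\<^sup>T * V = 1\<^sub>m k"
    and surj: "\<And>j. 1 \<le> j \<Longrightarrow> j \<le> l \<Longrightarrow> \<phi> j ` {..<N (j - 1)} = {..<N j}"
    and conn_sets: "\<And>j r. 1 \<le> j \<Longrightarrow> j \<le> l \<Longrightarrow> r < N j \<Longrightarrow>
        induces_connected (weights_of (Llev (laplacian W) N \<phi> (j - 1))) (contraction_set N \<phi> j r)"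
    and level: "1 \<le> l"
    and S_fac: "S \<in> carrier_mat (dim_row S) (N (l - 1))"
        "S\<^sup>T * S = Llev (laplacian W) N \<phi> (l - 1)"
  shows "(spec_norm (S * Pi_perp N \<phi> l * Alev (laplacian W) V N \<phi> (l - 1)))\<^sup>2
    \<le> (\<Sum>r<N l. (L_norm (L_C (weights_of (Llev (laplacian W) N \<phi> (l - 1))) (contraction_set N \<phi> l r))
                  (Pi_C_perp (N (l - 1)) (contraction_set N \<phi> l r) * Alev (laplacian W) V N \<phi> (l - 1)))\<^sup>2)"
proof -
  obtain m where l: "l = Suc m" using level by (cases l) auto
  have L: "is_laplacian (N m) (Llev (laplacian W) N \<phi> m)"
  proof (rule is_laplacian_Llev[where N = N, OF graph])
    fix j assume "1 \<le> j" "j \<le> m"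
    hence "\<phi> j ` {..<N (j - 1)} = {..<N j}" using l by (intro surj) simp_all
    thus "\<phi> j ` {..<N (j - 1)} \<subseteq> {..<N j}" by simp
  qed
  have image: "\<phi> (Suc m) ` {..<N m} = {..<N (Suc m)}" using surj[of "Suc m"] unfolding l by simp
  have range: "\<phi> (Suc m) i < N (Suc m)" if "i < N m" for i
    using imageI[of i "{..<N m}" "\<phi> (Suc m)"] that unfolding image by simp
  have "l - 1 = m" using l by simp
  note S = S_fac[unfolded this]
  have A: "Alev (laplacian W) V N \<phi> m \<in> carrier_mat (N m) (dim_col (Alev (laplacian W) V N \<phi> m))"
    using dim_row_Alev[where N = N, OF V_basis(1)] by auto
  show ?thesis unfolding L_norm_def l diff_Suc_1
  proof (rule spec_norm_sq_le_sum, goal_cases)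
    case (2 x)
    hence x: "x \<in> carrier_vec (dim_col (Alev (laplacian W) V N \<phi> m))" by simp
    show ?case by (rule coarsening_error_mult_le_local_errors[where N = N and \<phi> = \<phi> and m = m, OF L range S A x])
  qed simp
qed

end
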